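(* Let $V=[n]$. For every traceless self-adjoint operator $X$ on $\mathcal H_V$, $$\|X\|_{W_1}\le\|X\|_1+\|\mathrm{Tr}_1X\|_1+\|\mathrm{Tr}_{12}X\|_1+\dots+\|\mathrm{Tr}_{1\ldots n-1}X\|_1 .$$
   Context: Each site of $[n]$ carries a qudit $\mathbb C^d$; $\mathrm{Tr}_{1\ldots k}$ is the partial trace over sites $1,\dots,k$. Quantum Lipschitz constant: for self-adjoint $H$, $\|H\|_L:=2\max_{i\in V}\min\{\|H-H^{(i)}\|_\infty: H^{(i)}\text{ self-adjoint acting trivially on site }i\}$. Quantum $W_1$ norm: for traceless self-adjoint $X$, $\|X\|_{W_1}:=\max\{\mathrm{Tr}[XH]:H\text{ self-adjoint},\|H\|_L\le1\}$. *)

theory Defs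
  imports "HOL-Analysis.Analysis"
begin

text \<open>Basis configurations of the qudits on a finite site set S: a configuration
assigns to each site i in S a level x i < d, and is 0 off S.  Operators on the
Hilbert space of sites S are complex matrices indexed by configurations
(only entries at configurations in Conf S d matter).\<close>

type_synonym config = "nat \<Rightarrow> nat"
type_synonym qop = "config \<Rightarrow> config \<Rightarrow> complex"

definition Conf :: "nat set \<Rightarrow> nat \<Rightarrow> config set" where
  "Conf S d = {x. (\<forall>i\<in>S. x i < d) \<and> (\<forall>i. i \<notin> S \<longrightarrow> x i = 0)}"

definition self_adj :: "nat set \<Rightarrow> nat \<Rightarrow> qop \<Rightarrow> bool" where
  "self_adj S d A \<longleftrightarrow> (\<forall>x\<in>Conf S d. \<forall>y\<in>Conf S d. A y x = cnj (A x y))"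

definition mtrace :: "nat set \<Rightarrow> nat \<Rightarrow> qop \<Rightarrow> complex" where
  "mtrace S d A = (\<Sum>x\<in>Conf S d. A x x)"

definition mmult :: "nat set \<Rightarrow> nat \<Rightarrow> qop \<Rightarrow> qop \<Rightarrow> qop" where
  "mmult S d A B = (\<lambda>x y. if x \<in> Conf S d \<and> y \<in> Conf S d
      then (\<Sum>z\<in>Conf S d. A x z * B z y) else 0)"

definition adj :: "qop \<Rightarrow> qop" where
  "adj A = (\<lambda>x y. cnj (A y x))"

definition op_norm :: "nat set \<Rightarrow> nat \<Rightarrow> qop \<Rightarrow> real" where
  "op_norm S d A = Sup {sqrt (\<Sum>x\<in>Conf S d. (cmod (\<Sum>y\<in>Conf S d. A x y * v y))^2) | v.
      (\<Sum>x\<in>Conf S d. (cmod (v x))^2) \<le> 1}"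

definition psd :: "nat set \<Rightarrow> nat \<Rightarrow> qop \<Rightarrow> bool" where
  "psd S d P \<longleftrightarrow> self_adj S d P \<and>
     (\<forall>v. 0 \<le> Re (\<Sum>x\<in>Conf S d. \<Sum>y\<in>Conf S d. cnj (v x) * P x y * v y))"

definition supported :: "nat set \<Rightarrow> nat \<Rightarrow> qop \<Rightarrow> bool" where
  "supported S d P \<longleftrightarrow> (\<forall>x y. x \<notin> Conf S d \<or> y \<notin> Conf S d \<longrightarrow> P x y = 0)"

definition abs_op :: "nat set \<Rightarrow> nat \<Rightarrow> qop \<Rightarrow> qop" where
  "abs_op S d A = (THE P. supported S d P \<and> psd S d P \<and> mmult S d P P = mmult S d (adj A) A)"

definition trace_norm :: "nat set \<Rightarrow> nat \<Rightarrow> qop \<Rightarrow> real" where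
  "trace_norm S d A = Re (mtrace S d (abs_op S d A))"

definition merge :: "nat set \<Rightarrow> config \<Rightarrow> config \<Rightarrow> config" where
  "merge T z x = (\<lambda>i. if i \<in> T then z i else x i)"

text \<open>Partial trace over the sites in T: maps operators on S to operators on S - T.\<close>
definition ptrace :: "nat set \<Rightarrow> nat \<Rightarrow> qop \<Rightarrow> qop" where
  "ptrace T d A = (\<lambda>x y. \<Sum>z\<in>Conf T d. A (merge T z x) (merge T z y))"

text \<open>H acts trivially on site i: H = I_i \<otimes> K for some operator K on the other sites.\<close>
definition acts_trivially :: "nat set \<Rightarrow> nat \<Rightarrow> nat \<Rightarrow> qop \<Rightarrow> bool" where
  "acts_trivially S d i H \<longleftrightarrow> (\<exists>K. \<forall>x\<in>Conf S d. \<forall>y\<in>Conf S d.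
      H x y = (if x i = y i then K (x(i:=0)) (y(i:=0)) else 0))"

definition lip_const :: "nat set \<Rightarrow> nat \<Rightarrow> qop \<Rightarrow> real" where
  "lip_const S d H = 2 * Max ((\<lambda>i. Inf {op_norm S d (\<lambda>x y. H x y - H' x y) | H'.
      self_adj S d H' \<and> acts_trivially S d i H'}) ` S)"

definition W1 :: "nat set \<Rightarrow> nat \<Rightarrow> qop \<Rightarrow> real" where
  "W1 S d X = Sup {Re (mtrace S d (mmult S d X H)) | H. self_adj S d H \<and> lip_const S d H \<le> 1}"

end

theory Submission
  imports Defs
begin

(* Let Y_k = d^-k I_{0..k-1} (x) Tr_{0..k-1} X, so that Y_0 = X and, X being traceless, Y_n = 0;
   hence Tr[X H] = sum_k Tr[(Y_k - Y_{k+1}) H].  If H_k acts trivially on site k, then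
   Tr[Y_k H_k] = Tr[Y_{k+1} H_k], so in the k-th term H may be replaced by H - H_k, whose operator
   norm can be taken arbitrarily close to ||H||_L / 2 <= 1/2.  Writing Tr_{0..k-1} X in its
   eigenbasis shows |Tr[Y_k G]| <= ||Tr_{0..k-1} X||_1 ||G||_oo, and each trace norm then occurs in
   at most two terms of the telescoping sum. *)

section \<open>Vectors and matrices over a finite index set\<close>

definition cinner :: "'a set \<Rightarrow> ('a \<Rightarrow> complex) \<Rightarrow> ('a \<Rightarrow> complex) \<Rightarrow> complex" where
  "cinner I u v = (\<Sum>x\<in>I. cnj (u x) * v x)"

definition mvec :: "'a set \<Rightarrow> ('a \<Rightarrow> 'a \<Rightarrow> complex) \<Rightarrow> ('a \<Rightarrow> complex) \<Rightarrow> 'a \<Rightarrow> complex" where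
  "mvec I A v = (\<lambda>x. \<Sum>y\<in>I. A x y * v y)"

definition hermitian :: "'a set \<Rightarrow> ('a \<Rightarrow> 'a \<Rightarrow> complex) \<Rightarrow> bool" where
  "hermitian I A \<longleftrightarrow> (\<forall>x\<in>I. \<forall>y\<in>I. A y x = cnj (A x y))"

definition sqnorm :: "'a set \<Rightarrow> ('a \<Rightarrow> complex) \<Rightarrow> real" where
  "sqnorm I v = (\<Sum>x\<in>I. (cmod (v x))\<^sup>2)"

definition qform :: "'a set \<Rightarrow> ('a \<Rightarrow> 'a \<Rightarrow> complex) \<Rightarrow> ('a \<Rightarrow> complex) \<Rightarrow> real" where
  "qform I A v = Re (cinner I v (mvec I A v))"

definition eigenvector :: "'a set \<Rightarrow> ('a \<Rightarrow> 'a \<Rightarrow> complex) \<Rightarrow> ('a \<Rightarrow> complex) \<Rightarrow> real \<Rightarrow> bool" where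
  "eigenvector I A v l \<longleftrightarrow> (\<forall>x\<in>I. mvec I A v x = of_real l * v x)"

definition orthonormal :: "'a set \<Rightarrow> nat \<Rightarrow> (nat \<Rightarrow> 'a \<Rightarrow> complex) \<Rightarrow> bool" where
  "orthonormal I m u \<longleftrightarrow> (\<forall>i<m. \<forall>j<m. cinner I (u i) (u j) = (if i = j then 1 else 0))"

definition spectral_decomp ::
    "'a set \<Rightarrow> nat \<Rightarrow> (nat \<Rightarrow> real) \<Rightarrow> (nat \<Rightarrow> 'a \<Rightarrow> complex) \<Rightarrow> ('a \<Rightarrow> 'a \<Rightarrow> complex) \<Rightarrow> bool" where
  "spectral_decomp I m lam u A \<longleftrightarrow>
     (\<forall>x\<in>I. \<forall>y\<in>I. A x y = (\<Sum>j<m. of_real (lam j) * u j x * cnj (u j y)))"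

lemma cinner_self: "cinner I v v = of_real (sqnorm I v)"
  unfolding cinner_def sqnorm_def by (simp add: complex_norm_square mult.commute del: of_real_power)

lemma sqnorm_nonneg: "0 \<le> sqnorm I v"
  unfolding sqnorm_def by (simp add: sum_nonneg)

lemma sqnorm_Re_cinner: "sqnorm I v = Re (cinner I v v)"
  by (simp add: cinner_self)

lemma cnj_cinner: "cnj (cinner I u v) = cinner I v u"
  unfolding cinner_def by (simp add: mult.commute)

lemma cinner_add_right: "cinner I u (\<lambda>x. v x + w x) = cinner I u v + cinner I u w"
  unfolding cinner_def by (simp add: distrib_left sum.distrib)

lemma cinner_diff_right: "cinner I u (\<lambda>x. v x - w x) = cinner I u v - cinner I u w"
  unfolding cinner_def by (simp add: right_diff_distrib sum_subtractf)

lemma cinner_mult_right: "cinner I u (\<lambda>x. c * v x) = c * cinner I u v"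
  unfolding cinner_def by (simp add: sum_distrib_left algebra_simps)

lemma cinner_sum_right: "cinner I u (\<lambda>x. \<Sum>j\<in>J. f j x) = (\<Sum>j\<in>J. cinner I u (f j))"
  unfolding cinner_def by (simp add: sum_distrib_left) (rule sum.swap)

lemma cinner_add_left: "cinner I (\<lambda>x. v x + w x) u = cinner I v u + cinner I w u"
  unfolding cinner_def by (simp add: distrib_right sum.distrib)

lemma cinner_diff_left: "cinner I (\<lambda>x. v x - w x) u = cinner I v u - cinner I w u"
  unfolding cinner_def by (simp add: left_diff_distrib sum_subtractf)

lemma cinner_mult_left: "cinner I (\<lambda>x. c * v x) u = cnj c * cinner I v u"
  unfolding cinner_def by (simp add: sum_distrib_left algebra_simps)

lemma cinner_sum_left: "cinner I (\<lambda>x. \<Sum>j\<in>J. f j x) u = (\<Sum>j\<in>J. cinner I (f j) u)"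
  unfolding cinner_def by (simp add: sum_distrib_right) (rule sum.swap)

lemma cinner_cong:
  "(\<And>x. x \<in> I \<Longrightarrow> u x = u' x) \<Longrightarrow> (\<And>x. x \<in> I \<Longrightarrow> v x = v' x) \<Longrightarrow> cinner I u v = cinner I u' v'"
  unfolding cinner_def by (rule sum.cong) auto

lemma cinner_indicator_left:
  assumes "finite I" "x0 \<in> I"
  shows "cinner I (\<lambda>z. if z = x0 then 1 else 0) f = f x0"
proof -
  have e: "(\<lambda>z. cnj (if z = x0 then 1 else 0) * f z) = (\<lambda>z. if z = x0 then f z else 0)" by auto
  show ?thesis unfolding cinner_def e using assms by simp
qed

lemma sqnorm_indicator:
  assumes "finite I" "x0 \<in> I"
  shows "sqnorm I (\<lambda>z. if z = x0 then 1 else 0) = 1"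
proof -
  have e: "(\<lambda>z. (cmod (if z = x0 then 1 else 0 :: complex))\<^sup>2) = (\<lambda>z. if z = x0 then 1 else 0)"
    by auto
  show ?thesis unfolding sqnorm_def e using assms by simp
qed

lemma mvec_add: "mvec I A (\<lambda>x. v x + w x) = (\<lambda>x. mvec I A v x + mvec I A w x)"
  unfolding mvec_def by (simp add: distrib_left sum.distrib)

lemma mvec_mult: "mvec I A (\<lambda>x. c * v x) = (\<lambda>x. c * mvec I A v x)"
  unfolding mvec_def by (simp add: sum_distrib_left algebra_simps)

lemma mvec_indicator:
  assumes "finite I" "y0 \<in> I"
  shows "mvec I A (\<lambda>z. if z = y0 then 1 else 0) x = A x y0"
proof -
  have e: "(\<lambda>y. A x y * (if y = y0 then 1 else 0)) = (\<lambda>y. if y = y0 then A x y else 0)" by auto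
  show ?thesis unfolding mvec_def e using assms by simp
qed

lemma sqnorm_eq_0D:
  assumes "finite I" "sqnorm I v = 0" "x \<in> I"
  shows "v x = 0"
  using assms sum_nonneg_eq_0_iff[of I "\<lambda>x. (cmod (v x))\<^sup>2"] unfolding sqnorm_def by auto

lemma sqnorm_le_1_imp_norm_le_1:
  assumes "finite I" "sqnorm I v \<le> 1" "x \<in> I"
  shows "cmod (v x) \<le> 1"
proof -
  have "(cmod (v x))\<^sup>2 \<le> sqnorm I v"
    unfolding sqnorm_def using assms by (intro member_le_sum) auto
  with assms(2) have "(cmod (v x))\<^sup>2 \<le> 1\<^sup>2" by simp
  then show ?thesis by (rule power2_le_imp_le) simp
qed

lemma sqnorm_scaleR: "sqnorm I (\<lambda>x. of_real s * v x) = s\<^sup>2 * sqnorm I v"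
  unfolding sqnorm_Re_cinner by (simp add: cinner_mult_left cinner_mult_right power2_eq_square)

lemma qform_scaleR: "qform I A (\<lambda>x. of_real s * v x) = s\<^sup>2 * qform I A v"
  unfolding qform_def by (simp add: mvec_mult cinner_mult_left cinner_mult_right power2_eq_square)

lemma hermitian_adjoint:
  assumes "hermitian I A"
  shows "cinner I u (mvec I A v) = cinner I (mvec I A u) v"
proof -
  have "cinner I u (mvec I A v) = (\<Sum>x\<in>I. \<Sum>y\<in>I. cnj (u x) * A x y * v y)"
    unfolding cinner_def mvec_def by (simp add: sum_distrib_left algebra_simps)
  also have "\<dots> = (\<Sum>y\<in>I. \<Sum>x\<in>I. cnj (u x) * A x y * v y)" by (rule sum.swap)
  also have "\<dots> = (\<Sum>y\<in>I. \<Sum>x\<in>I. cnj (A y x * u x) * v y)"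
  proof (intro sum.cong refl)
    fix x y assume "x \<in> I" "y \<in> I"
    with assms have "A y x = cnj (A x y)" unfolding hermitian_def by blast
    then show "cnj (u x) * A x y * v y = cnj (A y x * u x) * v y" by simp
  qed
  also have "\<dots> = cinner I (mvec I A u) v"
    unfolding cinner_def mvec_def by (simp add: sum_distrib_right)
  finally show ?thesis .
qed

lemma cinner_mvec_self:
  assumes "hermitian I A"
  shows "cinner I v (mvec I A v) = of_real (qform I A v)"
proof -
  have "cnj (cinner I v (mvec I A v)) = cinner I v (mvec I A v)"
    by (simp add: cnj_cinner hermitian_adjoint[OF assms])
  then show ?thesis unfolding qform_def by (metis Reals_cnj_iff complex_is_Real_iff of_real_Re)
qed

lemma cinner_mvec_add_scaled:
  assumes "hermitian I A"
  shows "cinner I (\<lambda>z. u z + c * w z) (mvec I A (\<lambda>z. u z + c * w z)) =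
    cinner I u (mvec I A u) + c * cinner I u (mvec I A w) + cnj c * cnj (cinner I u (mvec I A w))
    + cnj c * c * cinner I w (mvec I A w)"
proof -
  have "cnj (cinner I u (mvec I A w)) = cinner I w (mvec I A u)"
    by (simp add: cnj_cinner hermitian_adjoint[OF assms])
  then show ?thesis
    by (simp add: mvec_add mvec_mult cinner_add_left cinner_add_right cinner_mult_left
        cinner_mult_right algebra_simps)
qed

lemma hermitian_uminus: "hermitian I A \<Longrightarrow> hermitian I (\<lambda>x y. - A x y)"
  unfolding hermitian_def complex_cnj_minus neg_equal_iff_equal .

lemma qform_uminus: "qform I (\<lambda>x y. - A x y) v = - qform I A v"
  unfolding qform_def cinner_def mvec_def by (simp add: sum_negf)

lemma eigenvector_uminus: "eigenvector I (\<lambda>x y. - A x y) v l \<longleftrightarrow> eigenvector I A v (- l)"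
proof -
  have neg: "mvec I (\<lambda>x y. - A x y) v x = - mvec I A v x" for x
    unfolding mvec_def by (simp add: sum_negf)
  show ?thesis
    unfolding eigenvector_def neg by (simp add: neg_eq_iff_add_eq_0 eq_neg_iff_add_eq_0)
qed

lemma hermitian_qform_eq_0_imp_0:
  assumes fin: "finite I" and h: "hermitian I A" and q0: "\<And>w. qform I A w = 0"
    and x0: "x0 \<in> I" and y0: "y0 \<in> I"
  shows "A x0 y0 = 0"
proof -
  define ex where "ex = (\<lambda>z. if z = x0 then 1 else (0::complex))"
  define ey where "ey = (\<lambda>z. if z = y0 then 1 else (0::complex))"
  define a where "a = cinner I ex (mvec I A ey)"
  have a: "a = A x0 y0"
    unfolding a_def ex_def ey_def using cinner_indicator_left[OF fin x0] mvec_indicator[OF fin y0] by simp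
  \<comment> \<open>polarization: the quadratic form of \<open>ex + c ey\<close> is \<open>2 Re (c a)\<close>\<close>
  have "Re (c * a) = 0" for c
  proof -
    have "of_real (qform I A (\<lambda>t. ex t + c * ey t)) = c * a + cnj (c * a)"
      using cinner_mvec_add_scaled[OF h, of ex c ey] cinner_mvec_self[OF h] q0
      unfolding a_def by simp
    then show ?thesis using q0 by (simp add: complex_eq_iff mult.commute)
  qed
  from this[of 1] this[of \<i>] show ?thesis unfolding a by (simp add: complex_eq_iff)
qed
section \<open>The spectral theorem\<close>

lemma bounded_family_convergent_subseq:
  fixes V :: "nat \<Rightarrow> 'a \<Rightarrow> complex"
  assumes "finite I" "\<And>k x. x \<in> I \<Longrightarrow> cmod (V k x) \<le> B"
  shows "\<exists>r l. strict_mono r \<and> (\<forall>x\<in>I. (\<lambda>k. V (r k) x) \<longlonglongrightarrow> l x)"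
  using assms
proof (induction I rule: finite_induct)
  case empty
  show ?case by (rule exI[of _ id]) (simp add: strict_mono_def)
next
  case (insert a F)
  then obtain r1 l1 where r1: "strict_mono r1" and l1: "\<forall>x\<in>F. (\<lambda>k. V (r1 k) x) \<longlonglongrightarrow> l1 x"
    by blast
  have "bounded (range (\<lambda>k. V (r1 k) a))"
    using insert(4)[of a] by (auto simp: bounded_iff)
  then obtain l2 r2 where r2: "strict_mono r2" and l2: "((\<lambda>k. V (r1 k) a) \<circ> r2) \<longlonglongrightarrow> l2"
    using bounded_imp_convergent_subsequence by blast
  have "(\<lambda>k. V ((r1 \<circ> r2) k) x) \<longlonglongrightarrow> (l1(a := l2)) x" if "x \<in> insert a F" for x
  proof (cases "x = a")
    case False
    with that l1 r2 have "((\<lambda>k. V (r1 k) x) \<circ> r2) \<longlonglongrightarrow> l1 x"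
      using LIMSEQ_subseq_LIMSEQ by blast
    with False show ?thesis by (simp add: o_def)
  qed (use l2 in \<open>simp add: o_def\<close>)
  moreover have "strict_mono (r1 \<circ> r2)" using r1 r2 by (simp add: strict_mono_o)
  ultimately show ?case by blast
qed

lemma abs_qform_le:
  assumes "finite I" "sqnorm I v = 1"
  shows "\<bar>qform I A v\<bar> \<le> (\<Sum>x\<in>I. \<Sum>y\<in>I. cmod (A x y))"
proof -
  have v: "cmod (v x) \<le> 1" if "x \<in> I" for x
    using assms that by (intro sqnorm_le_1_imp_norm_le_1) auto
  have "\<bar>qform I A v\<bar> \<le> cmod (cinner I v (mvec I A v))"
    unfolding qform_def by (rule abs_Re_le_cmod)
  also have "\<dots> \<le> (\<Sum>x\<in>I. \<Sum>y\<in>I. cmod (v x) * cmod (A x y) * cmod (v y))"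
    unfolding cinner_def mvec_def sum_distrib_left
    by (rule order_trans[OF norm_sum sum_mono], rule order_trans[OF norm_sum sum_mono])
       (simp add: norm_mult)
  also have "\<dots> \<le> (\<Sum>x\<in>I. \<Sum>y\<in>I. 1 * cmod (A x y) * 1)"
    using v by (intro sum_mono mult_mono) auto
  finally show ?thesis by simp
qed

lemma qform_le_if_unit_le:
  assumes "finite I" and unit: "\<And>v. sqnorm I v = 1 \<Longrightarrow> qform I A v \<le> M"
  shows "qform I A y \<le> M * sqnorm I y"
proof (cases "sqnorm I y = 0")
  case True
  then have "qform I A y = 0"
    using sqnorm_eq_0D[OF assms(1) True] unfolding qform_def cinner_def by simp
  with True show ?thesis by simp
next
  case False
  then have pos: "0 < sqnorm I y" using sqnorm_nonneg[of I y] by linarith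
  define s where "s = 1 / sqrt (sqnorm I y)"
  have s2: "s\<^sup>2 * sqnorm I y = 1" unfolding s_def using pos by (simp add: power_divide)
  have "s\<^sup>2 * qform I A y \<le> M"
    using unit[of "\<lambda>x. of_real s * y x"] by (simp add: sqnorm_scaleR qform_scaleR s2)
  then have "qform I A y * (s\<^sup>2 * sqnorm I y) \<le> M * sqnorm I y"
    using mult_left_mono[OF _ sqnorm_nonneg, of "s\<^sup>2 * qform I A y" M I y]
    by (simp add: algebra_simps)
  with s2 show ?thesis by simp
qed

lemma qform_max_attained:
  assumes fin: "finite I" and ne: "I \<noteq> {}"
  shows "\<exists>v. sqnorm I v = 1 \<and> (\<forall>w. sqnorm I w = 1 \<longrightarrow> qform I A w \<le> qform I A v)"
proof -
  define Q where "Q = {qform I A v | v. sqnorm I v = 1}"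
  define M where "M = Sup Q"
  obtain x0 where x0: "x0 \<in> I" using ne by blast
  have Qne: "Q \<noteq> {}" unfolding Q_def using sqnorm_indicator[OF fin x0] by blast
  have Qbdd: "bdd_above Q" unfolding Q_def bdd_above_def
    using abs_qform_le[OF fin] by (intro exI[of _ "\<Sum>x\<in>I. \<Sum>y\<in>I. cmod (A x y)"]) (auto simp: abs_le_iff)
  have upper: "qform I A w \<le> M" if "sqnorm I w = 1" for w
    unfolding M_def using Qbdd that by (intro cSup_upper) (auto simp: Q_def)
  have "\<exists>v. sqnorm I v = 1 \<and> M - 1 / real (Suc k) < qform I A v" for k
  proof -
    obtain q where "q \<in> Q" "M - 1 / real (Suc k) < q"
      using less_cSupD[OF Qne, of "M - 1 / real (Suc k)"] unfolding M_def by auto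
    then show ?thesis unfolding Q_def by blast
  qed
  then obtain V where V1: "\<And>k. sqnorm I (V k) = 1"
    and V2: "\<And>k. M - 1 / real (Suc k) < qform I A (V k)"
    by metis
  obtain r l where r: "strict_mono r" and l: "\<forall>x\<in>I. (\<lambda>k. V (r k) x) \<longlonglongrightarrow> l x"
    using bounded_family_convergent_subseq[OF fin, of V 1] sqnorm_le_1_imp_norm_le_1[OF fin] V1
    by (metis order_refl)
  have "(\<lambda>k. sqnorm I (V (r k))) \<longlonglongrightarrow> sqnorm I l"
    unfolding sqnorm_def using l by (intro tendsto_intros) auto
  then have l1: "sqnorm I l = 1" using V1 LIMSEQ_unique[OF _ tendsto_const[of 1]] by simp
  have "(\<lambda>k. qform I A (V (r k))) \<longlonglongrightarrow> qform I A l"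
    unfolding qform_def cinner_def mvec_def using l by (intro tendsto_intros) auto
  moreover have "(\<lambda>k. qform I A (V (r k))) \<longlonglongrightarrow> M"
  proof (rule tendsto_sandwich[of "\<lambda>k. M - 1 / real (Suc k)" _ _ "\<lambda>k. M"])
    have "M - 1 / real (Suc k) \<le> qform I A (V (r k))" for k
    proof -
      have "1 / real (Suc (r k)) \<le> 1 / real (Suc k)" using seq_suble[OF r, of k] by (simp add: frac_le)
      then show ?thesis using V2[of "r k"] by linarith
    qed
    then show "\<forall>\<^sub>F k in sequentially. M - 1 / real (Suc k) \<le> qform I A (V (r k))" by simp
    show "\<forall>\<^sub>F k in sequentially. qform I A (V (r k)) \<le> M" using upper V1 by simp
    show "(\<lambda>k. M - 1 / real (Suc k)) \<longlonglongrightarrow> M"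
      using tendsto_diff[OF tendsto_const[of M] LIMSEQ_Suc[OF lim_const_over_n[of 1]]] by simp
  qed simp
  ultimately have "qform I A l = M" using LIMSEQ_unique by blast
  then show ?thesis using l1 upper by metis
qed

text \<open>A maximizer \<open>v\<close> of the quadratic form on the unit sphere is an eigenvector: for the
  residual \<open>r = A v - M v\<close>, the vectors \<open>v + t r\<close> give \<open>2 t \<parallel>r\<parallel>\<^sup>2 \<le> O(t\<^sup>2)\<close>, forcing \<open>r = 0\<close>.\<close>

lemma qform_maximizer_eigenvector:
  assumes fin: "finite I" and h: "hermitian I A" and v: "sqnorm I v = 1"
    and bound: "\<And>y. qform I A y \<le> qform I A v * sqnorm I y"
  shows "eigenvector I A v (qform I A v)"
proof -
  define M where "M = qform I A v"
  define r where "r = (\<lambda>x. mvec I A v x - of_real M * v x)"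
  define R where "R = sqnorm I r"
  have vAv: "cinner I v (mvec I A v) = of_real M" unfolding M_def by (rule cinner_mvec_self[OF h])
  have vv: "cinner I v v = 1" using cinner_self[of I v] v by simp
  have vr: "cinner I v r = 0" unfolding r_def by (simp add: cinner_diff_right cinner_mult_right vAv vv)
  then have rv: "cinner I r v = 0" using cnj_cinner[of I v r] by simp
  have "cinner I r (mvec I A v) = cinner I r (\<lambda>x. r x + of_real M * v x)"
    by (rule cinner_cong) (simp_all add: r_def)
  also have "\<dots> = of_real R"
    by (simp add: cinner_add_right cinner_mult_right rv cinner_self R_def)
  finally have vAr: "cinner I v (mvec I A r) = of_real R"
    using hermitian_adjoint[OF h, of v r] cnj_cinner[of I r "mvec I A v"] by simp
  have key: "2 * t * R \<le> t\<^sup>2 * (M * R - qform I A r)" for t :: real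
  proof -
    let ?y = "\<lambda>z. v z + of_real t * r z"
    have q: "cinner I ?y (mvec I A ?y) = of_real (M + 2 * t * R + t\<^sup>2 * qform I A r)"
      unfolding cinner_mvec_add_scaled[OF h] using vAr cinner_mvec_self[OF h, of r] vAv
      by (simp add: power2_eq_square algebra_simps)
    have n: "cinner I ?y ?y = of_real (1 + t\<^sup>2 * R)"
      by (simp add: cinner_add_left cinner_add_right cinner_mult_left cinner_mult_right vr rv vv
          cinner_self R_def v power2_eq_square)
    have "qform I A ?y \<le> M * sqnorm I ?y" unfolding M_def by (rule bound)
    then have "M + 2 * t * R + t\<^sup>2 * qform I A r \<le> M * (1 + t\<^sup>2 * R)"
      unfolding qform_def sqnorm_Re_cinner q n by simp
    then show ?thesis by (simp add: algebra_simps)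
  qed
  have "R = 0"
  proof (rule ccontr)
    assume "R \<noteq> 0"
    then have Rp: "R > 0" using sqnorm_nonneg[of I r] unfolding R_def by linarith
    define C where "C = \<bar>M * R - qform I A r\<bar> + 1"
    have Cp: "C > 0" unfolding C_def by simp
    define t where "t = R / C"
    have tp: "t > 0" unfolding t_def using Rp Cp by simp
    have "2 * t * R \<le> t\<^sup>2 * (M * R - qform I A r)" by (rule key)
    also have "\<dots> \<le> t\<^sup>2 * C" unfolding C_def by (intro mult_left_mono) auto
    also have "\<dots> = t * R" unfolding t_def using Cp by (simp add: power2_eq_square)
    finally show False using tp Rp by (simp add: mult_le_cancel_left_pos)
  qed
  then show ?thesis
    using sqnorm_eq_0D[OF fin, of r] unfolding eigenvector_def R_def r_def M_def by simp
qed

lemma max_eigenvector: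
  assumes fin: "finite I" and ne: "I \<noteq> {}" and h: "hermitian I A"
  shows "\<exists>v M. sqnorm I v = 1 \<and> eigenvector I A v M \<and> (\<forall>y. qform I A y \<le> M * sqnorm I y)"
proof -
  obtain v where v: "sqnorm I v = 1" and max: "\<And>w. sqnorm I w = 1 \<Longrightarrow> qform I A w \<le> qform I A v"
    using qform_max_attained[OF fin ne] by blast
  have "qform I A y \<le> qform I A v * sqnorm I y" for y
    by (rule qform_le_if_unit_le[OF fin max])
  with qform_maximizer_eigenvector[OF fin h v] v show ?thesis by blast
qed

lemma nonzero_eigenvector:
  assumes fin: "finite I" and h: "hermitian I A" and x0: "x0 \<in> I" and y0: "y0 \<in> I"
    and nz: "A x0 y0 \<noteq> 0"
  shows "\<exists>v \<mu>. sqnorm I v = 1 \<and> \<mu> \<noteq> 0 \<and> eigenvector I A v \<mu>"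
proof (rule ccontr)
  assume none: "\<not> ?thesis"
  have ne: "I \<noteq> {}" using x0 by blast
  obtain v M where v: "sqnorm I v = 1" "eigenvector I A v M"
    and le: "\<And>y. qform I A y \<le> M * sqnorm I y"
    using max_eigenvector[OF fin ne h] by blast
  have "M = 0" using none v by metis
  obtain v' M' where v': "sqnorm I v' = 1" "eigenvector I (\<lambda>x y. - A x y) v' M'"
    and le': "\<And>y. qform I (\<lambda>x y. - A x y) y \<le> M' * sqnorm I y"
    using max_eigenvector[OF fin ne hermitian_uminus[OF h]] by blast
  from v' have "eigenvector I A v' (- M')" by (simp add: eigenvector_uminus)
  then have "M' = 0" using none v'(1) by (metis neg_equal_0_iff_equal)
  have "qform I A w = 0" for w
    using le[of w] le'[of w] \<open>M = 0\<close> \<open>M' = 0\<close> by (simp add: qform_uminus)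
  then show False using hermitian_qform_eq_0_imp_0[OF fin h _ x0 y0] nz by blast
qed

lemma spectral_decomp_eigenvector:
  assumes o: "orthonormal I m u" and d: "spectral_decomp I m lam u A" and i: "i < m"
  shows "eigenvector I A (u i) (lam i)"
  unfolding eigenvector_def
proof
  fix x assume x: "x \<in> I"
  have "mvec I A (u i) x = (\<Sum>y\<in>I. (\<Sum>j<m. of_real (lam j) * u j x * cnj (u j y)) * u i y)"
    unfolding mvec_def using d x unfolding spectral_decomp_def by (intro sum.cong) auto
  also have "\<dots> = (\<Sum>j<m. of_real (lam j) * u j x * cinner I (u j) (u i))"
    unfolding cinner_def by (simp add: sum_distrib_right sum_distrib_left mult.assoc) (rule sum.swap)
  also have "\<dots> = (\<Sum>j<m. if j = i then of_real (lam j) * u j x else 0)"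
    using o i unfolding orthonormal_def by (intro sum.cong) auto
  finally show "mvec I A (u i) x = of_real (lam i) * u i x" using i by simp
qed

lemma bessel_inequality:
  assumes o: "orthonormal I m u"
  shows "(\<Sum>j<m. (cmod (cinner I (u j) e))\<^sup>2) \<le> sqnorm I e"
proof -
  define c where "c = (\<lambda>j. cinner I (u j) e)"
  define p where "p = (\<lambda>x. \<Sum>j<m. c j * u j x)"
  have cc: "(\<Sum>j<m. cnj (c j) * c j) = of_real (\<Sum>j<m. (cmod (c j))\<^sup>2)"
    by (simp add: complex_norm_square mult.commute del: of_real_power)
  have "cinner I p p = (\<Sum>i<m. \<Sum>j<m. cnj (c i) * c j * cinner I (u i) (u j))"
    unfolding p_def
    by (simp add: cinner_sum_left cinner_sum_right cinner_mult_left cinner_mult_right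
        sum_distrib_left mult.assoc)
  also have "\<dots> = (\<Sum>i<m. \<Sum>j<m. if i = j then cnj (c i) * c j else 0)"
    using o unfolding orthonormal_def by (intro sum.cong refl) auto
  also have "\<dots> = (\<Sum>j<m. cnj (c j) * c j)" by simp
  finally have pp: "cinner I p p = (\<Sum>j<m. cnj (c j) * c j)" .
  have "cinner I e (u j) = cnj (c j)" for j unfolding c_def by (simp add: cnj_cinner)
  then have ep: "cinner I e p = (\<Sum>j<m. cnj (c j) * c j)"
    unfolding p_def by (simp add: cinner_sum_right cinner_mult_right mult.commute)
  have pe: "cinner I p e = (\<Sum>j<m. cnj (c j) * c j)"
    unfolding p_def by (simp add: cinner_sum_left cinner_mult_left c_def)
  have "cinner I (\<lambda>x. e x - p x) (\<lambda>x. e x - p x) = of_real (sqnorm I e - (\<Sum>j<m. (cmod (c j))\<^sup>2))"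
    by (simp add: cinner_diff_left cinner_diff_right pp ep pe cc cinner_self[of I e])
  then show ?thesis
    using sqnorm_nonneg[of I "\<lambda>x. e x - p x"] unfolding sqnorm_Re_cinner c_def by simp
qed

lemma orthonormal_le_card:
  assumes fin: "finite I" and o: "orthonormal I m u"
  shows "m \<le> card I"
proof -
  have "sqnorm I (u j) = 1" if "j < m" for j
    using o that cinner_self[of I "u j"] unfolding orthonormal_def by (metis of_real_eq_1_iff)
  then have "real m = (\<Sum>j<m. sqnorm I (u j))" by simp
  also have "\<dots> = (\<Sum>x\<in>I. \<Sum>j<m. (cmod (u j x))\<^sup>2)" unfolding sqnorm_def by (rule sum.swap)
  also have "\<dots> \<le> (\<Sum>x\<in>I. 1)"
  proof (rule sum_mono)
    fix x assume x: "x \<in> I"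
    have "cmod (u j x) = cmod (cinner I (u j) (\<lambda>z. if z = x then 1 else 0))" for j
      using cinner_indicator_left[OF fin x, of "u j"] cnj_cinner[of I "\<lambda>z. if z = x then 1 else 0" "u j"]
      by (metis complex_mod_cnj)
    then show "(\<Sum>j<m. (cmod (u j x))\<^sup>2) \<le> 1"
      using bessel_inequality[OF o, of "\<lambda>z. if z = x then 1 else 0"] sqnorm_indicator[OF fin x]
      by simp
  qed
  finally show ?thesis by simp
qed

lemma orthonormal_case_nat:
  assumes o: "orthonormal I m u" and v: "sqnorm I v = 1" and p: "\<forall>j<m. cinner I v (u j) = 0"
  shows "orthonormal I (Suc m) (case_nat v u)"
proof -
  have "cinner I (u j) v = 0" if "j < m" for j
    using p that cnj_cinner[of I v "u j"] by simp
  then show ?thesis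
    using o v p cinner_self[of I v] unfolding orthonormal_def
    by (auto split: nat.split simp: less_Suc_eq_0_disj)
qed

definition deflate :: "('a \<Rightarrow> 'a \<Rightarrow> complex) \<Rightarrow> real \<Rightarrow> ('a \<Rightarrow> complex) \<Rightarrow> 'a \<Rightarrow> 'a \<Rightarrow> complex" where
  "deflate A \<mu> v = (\<lambda>x y. A x y - of_real \<mu> * v x * cnj (v y))"

lemma mvec_deflate: "mvec I (deflate A \<mu> v) w x = mvec I A w x - of_real \<mu> * v x * cinner I v w"
  unfolding deflate_def mvec_def cinner_def
  by (simp add: left_diff_distrib sum_subtractf sum_distrib_left mult.assoc)

lemma hermitian_deflate:
  assumes "hermitian I A"
  shows "hermitian I (deflate A \<mu> v)"
  unfolding hermitian_def
proof (intro ballI)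
  fix x y assume "x \<in> I" "y \<in> I"
  with assms have "A y x = cnj (A x y)" unfolding hermitian_def by blast
  then show "deflate A \<mu> v y x = cnj (deflate A \<mu> v x y)"
    unfolding deflate_def by (simp add: mult.commute mult.left_commute)
qed

lemma deflate_eigenvector_orthogonal:
  assumes h: "hermitian I A" and v: "sqnorm I v = 1" and ev: "eigenvector I A v \<mu>"
    and l: "l \<noteq> 0" and ew: "eigenvector I (deflate A \<mu> v) w l"
  shows "cinner I v w = 0"
proof -
  have "mvec I (deflate A \<mu> v) v x = 0" if "x \<in> I" for x
    using ev v that unfolding mvec_deflate eigenvector_def by (simp add: cinner_self)
  then have "cinner I (mvec I (deflate A \<mu> v) v) w = 0"
    unfolding cinner_def by simp
  then have "cinner I v (mvec I (deflate A \<mu> v) w) = 0"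
    by (simp add: hermitian_adjoint[OF hermitian_deflate[OF h]])
  moreover have "cinner I v (mvec I (deflate A \<mu> v) w) = cinner I v (\<lambda>x. of_real l * w x)"
    using ew unfolding eigenvector_def by (intro cinner_cong) auto
  ultimately have "of_real l * cinner I v w = 0" by (simp add: cinner_mult_right)
  then show ?thesis using l by simp
qed

lemma spectral_decomp_undeflate:
  assumes o: "orthonormal I m u" and d: "spectral_decomp I m lam u (deflate A \<mu> v)"
  shows "spectral_decomp I (Suc m) (case_nat \<mu> lam) (case_nat v u) A"
  unfolding spectral_decomp_def
proof (intro ballI)
  fix x y assume "x \<in> I" "y \<in> I"
  then have "A x y = (\<Sum>j<m. of_real (lam j) * u j x * cnj (u j y)) + of_real \<mu> * v x * cnj (v y)"
    using d unfolding spectral_decomp_def deflate_def by (metis diff_add_cancel)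
  then show "A x y = (\<Sum>j<Suc m. of_real (case_nat \<mu> lam j) * case_nat v u j x * cnj (case_nat v u j y))"
    by (subst sum.lessThan_Suc_shift) (simp add: add.commute)
qed

lemma eigenvector_undeflate:
  assumes "eigenvector I (deflate A \<mu> v) w l" and "cinner I v w = 0"
  shows "eigenvector I A w l"
  using assms unfolding eigenvector_def mvec_deflate by simp

text \<open>Proved by induction on \<open>k\<close>, deflating one eigenvector at a time; for \<open>k > card I\<close>
  the second alternative is impossible, which gives the spectral theorem.\<close>

lemma spectral_decomp_or_eigenvectors:
  assumes fin: "finite I" and h: "hermitian I A"
  shows "(\<exists>m lam u. orthonormal I m u \<and> spectral_decomp I m lam u A \<and> (\<forall>j<m. lam j \<noteq> 0)) \<or>
    (\<exists>u lam. orthonormal I k u \<and> (\<forall>j<k. lam j \<noteq> 0 \<and> eigenvector I A (u j) (lam j)))"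
  using h
proof (induction k arbitrary: A)
  case 0
  show ?case unfolding orthonormal_def by auto
next
  case (Suc k)
  show ?case
  proof (cases "\<forall>x\<in>I. \<forall>y\<in>I. A x y = 0")
    case True
    then have "orthonormal I 0 (\<lambda>_ _. 0) \<and> spectral_decomp I 0 (\<lambda>_. 0) (\<lambda>_ _. 0) A"
      unfolding orthonormal_def spectral_decomp_def by simp
    then show ?thesis by blast
  next
    case False
    then obtain x0 y0 where "x0 \<in> I" "y0 \<in> I" "A x0 y0 \<noteq> 0" by blast
    then obtain v \<mu> where v: "sqnorm I v = 1" and mu: "\<mu> \<noteq> 0" and ev: "eigenvector I A v \<mu>"
      using nonzero_eigenvector[OF fin Suc.prems] by blast
    have orth: "\<And>w l. l \<noteq> 0 \<Longrightarrow> eigenvector I (deflate A \<mu> v) w l \<Longrightarrow> cinner I v w = 0"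
      using deflate_eigenvector_orthogonal[OF Suc.prems v ev] by blast
    from Suc.IH[OF hermitian_deflate[OF Suc.prems, of \<mu> v]] show ?thesis
    proof (elim disjE exE conjE)
      fix m lam u
      assume o: "orthonormal I m u" and d: "spectral_decomp I m lam u (deflate A \<mu> v)"
        and nz: "\<forall>j<m. lam j \<noteq> 0"
      have "\<forall>j<m. cinner I v (u j) = 0"
        using orth nz spectral_decomp_eigenvector[OF o d] by blast
      then show ?thesis
        using orthonormal_case_nat[OF o v] spectral_decomp_undeflate[OF o d] mu nz
        by (intro disjI1 exI[of _ "Suc m"] exI[of _ "case_nat \<mu> lam"] exI[of _ "case_nat v u"])
           (auto split: nat.split)
    next
      fix u lam
      assume o: "orthonormal I k u" and e: "\<forall>j<k. lam j \<noteq> 0 \<and> eigenvector I (deflate A \<mu> v) (u j) (lam j)"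
      then have p: "\<forall>j<k. cinner I v (u j) = 0" using orth by blast
      with e have "\<forall>j<k. eigenvector I A (u j) (lam j)" using eigenvector_undeflate by blast
      with p show ?thesis
        using orthonormal_case_nat[OF o v] e mu ev
        by (intro disjI2 exI[of _ "case_nat v u"] exI[of _ "case_nat \<mu> lam"])
           (auto simp: less_Suc_eq_0_disj)
    qed
  qed
qed

theorem spectral_theorem:
  assumes fin: "finite I" and h: "hermitian I A"
  shows "\<exists>m lam u. orthonormal I m u \<and> spectral_decomp I m lam u A \<and> (\<forall>j<m. lam j \<noteq> 0)"
  using spectral_decomp_or_eigenvectors[OF fin h, of "Suc (card I)"] orthonormal_le_card[OF fin]
  by fastforce
section \<open>Positive square roots and the trace norm\<close>

definition outer_sum :: "'b set \<Rightarrow> ('b \<Rightarrow> complex) \<Rightarrow> ('b \<Rightarrow> 'a \<Rightarrow> complex) \<Rightarrow> 'a \<Rightarrow> 'a \<Rightarrow> complex" where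
  "outer_sum J a w = (\<lambda>x y. \<Sum>j\<in>J. a j * w j x * cnj (w j y))"

definition mat_mult :: "'a set \<Rightarrow> ('a \<Rightarrow> 'a \<Rightarrow> complex) \<Rightarrow> ('a \<Rightarrow> 'a \<Rightarrow> complex) \<Rightarrow> 'a \<Rightarrow> 'a \<Rightarrow> complex" where
  "mat_mult I A B = (\<lambda>x y. if x \<in> I \<and> y \<in> I then (\<Sum>z\<in>I. A x z * B z y) else 0)"

definition supported_on :: "'a set \<Rightarrow> ('a \<Rightarrow> 'a \<Rightarrow> complex) \<Rightarrow> bool" where
  "supported_on I P \<longleftrightarrow> (\<forall>x y. x \<notin> I \<or> y \<notin> I \<longrightarrow> P x y = 0)"

definition pos_semidef :: "'a set \<Rightarrow> ('a \<Rightarrow> 'a \<Rightarrow> complex) \<Rightarrow> bool" where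
  "pos_semidef I P \<longleftrightarrow> hermitian I P \<and> (\<forall>v. 0 \<le> qform I P v)"

lemma qform_double_sum: "qform I P v = Re (\<Sum>x\<in>I. \<Sum>y\<in>I. cnj (v x) * P x y * v y)"
  unfolding qform_def cinner_def mvec_def by (simp add: sum_distrib_left mult.assoc)

lemma spectral_decomp_outer_sum:
  "spectral_decomp I m lam u T \<longleftrightarrow> (\<forall>x\<in>I. \<forall>y\<in>I. T x y = outer_sum {..<m} (\<lambda>j. of_real (lam j)) u x y)"
  unfolding spectral_decomp_def outer_sum_def by simp

lemma cinner_mvec_outer_sum:
  "cinner I v (mvec I (outer_sum J a w) v) = (\<Sum>j\<in>J. a j * (cinner I v (w j) * cinner I (w j) v))"
proof -
  have "cinner I v (mvec I (outer_sum J a w) v) =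
      (\<Sum>x\<in>I. \<Sum>y\<in>I. \<Sum>j\<in>J. a j * (cnj (v x) * w j x) * (cnj (w j y) * v y))"
    unfolding cinner_def mvec_def outer_sum_def by (simp add: sum_distrib_left sum_distrib_right ac_simps)
  also have "\<dots> = (\<Sum>j\<in>J. \<Sum>x\<in>I. \<Sum>y\<in>I. a j * (cnj (v x) * w j x) * (cnj (w j y) * v y))"
    by (subst sum.swap, rule sum.cong[OF refl], rule sum.swap)
  also have "\<dots> = (\<Sum>j\<in>J. a j * (cinner I v (w j) * cinner I (w j) v))"
  proof -
    have "(\<Sum>x\<in>I. \<Sum>y\<in>I. c * f x * g y) = c * (sum f I * sum g I)" for c :: complex and f g
      unfolding sum_product by (simp add: sum_distrib_left mult.assoc)
    then show ?thesis unfolding cinner_def by (intro sum.cong refl)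
  qed
  finally show ?thesis .
qed

lemma mat_mult_outer_sum:
  assumes o: "orthonormal I m u"
  shows "(\<Sum>z\<in>I. outer_sum {..<m} a u x z * outer_sum {..<m} b u z y) = outer_sum {..<m} (\<lambda>j. a j * b j) u x y"
proof -
  have "(\<Sum>z\<in>I. outer_sum {..<m} a u x z * outer_sum {..<m} b u z y) =
     (\<Sum>z\<in>I. \<Sum>i<m. \<Sum>j<m. a i * u i x * (b j * cnj (u j y)) * (cnj (u i z) * u j z))"
    unfolding outer_sum_def sum_product by (simp add: ac_simps)
  also have "\<dots> = (\<Sum>i<m. \<Sum>j<m. a i * u i x * (b j * cnj (u j y)) * cinner I (u i) (u j))"
    unfolding cinner_def sum_distrib_left
    by (rule trans[OF sum.swap], rule sum.cong[OF refl], rule sum.swap)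
  also have "\<dots> = (\<Sum>i<m. \<Sum>j<m. if i = j then a i * u i x * (b j * cnj (u j y)) else 0)"
    using o unfolding orthonormal_def by (intro sum.cong refl) auto
  also have "\<dots> = outer_sum {..<m} (\<lambda>j. a j * b j) u x y"
    unfolding outer_sum_def by (simp add: mult.assoc mult.left_commute)
  finally show ?thesis .
qed

lemma trace_outer_sum:
  assumes o: "orthonormal I m u"
  shows "(\<Sum>x\<in>I. outer_sum {..<m} a u x x) = (\<Sum>j<m. a j)"
proof -
  have "(\<Sum>x\<in>I. outer_sum {..<m} a u x x) = (\<Sum>j<m. a j * cinner I (u j) (u j))"
    unfolding outer_sum_def cinner_def by (simp add: sum_distrib_left ac_simps) (rule sum.swap)
  also have "\<dots> = (\<Sum>j<m. a j)" using o unfolding orthonormal_def by simp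
  finally show ?thesis .
qed

lemma cinner_mvec_mvec_hermitian:
  assumes "hermitian I Q"
  shows "cinner I (mvec I Q v) (mvec I Q v) = cinner I v (mvec I (mat_mult I Q Q) v)"
proof -
  have "cinner I (mvec I Q v) (mvec I Q v) = cinner I v (mvec I Q (mvec I Q v))"
    by (rule hermitian_adjoint[OF assms, symmetric])
  also have "\<dots> = cinner I v (mvec I (mat_mult I Q Q) v)"
  proof (rule cinner_cong)
    fix x assume x: "x \<in> I"
    have "mvec I Q (mvec I Q v) x = (\<Sum>z\<in>I. \<Sum>y\<in>I. Q x y * Q y z * v z)"
      unfolding mvec_def by (subst sum.swap) (simp add: sum_distrib_left mult.assoc)
    also have "\<dots> = mvec I (mat_mult I Q Q) v x"
      unfolding mvec_def mat_mult_def using x by (intro sum.cong refl) (simp add: sum_distrib_right)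
    finally show "mvec I Q (mvec I Q v) x = mvec I (mat_mult I Q Q) v x" .
  qed simp
  finally show ?thesis .
qed

lemma cinner_self_mvec_add_scaled:
  assumes h: "hermitian I R" and w: "sqnorm I w = 1"
    and a: "\<And>x. x \<in> I \<Longrightarrow> a x = mvec I R w x + of_real c * w x"
  shows "cinner I a a = cinner I (mvec I R w) (mvec I R w) + of_real (2 * c * qform I R w + c\<^sup>2)"
proof -
  have "cinner I a a = cinner I (\<lambda>x. mvec I R w x + of_real c * w x) (\<lambda>x. mvec I R w x + of_real c * w x)"
    using a by (intro cinner_cong) auto
  also have "\<dots> = cinner I (mvec I R w) (mvec I R w) + of_real c * cinner I (mvec I R w) w
      + of_real c * cinner I w (mvec I R w) + of_real c * of_real c * cinner I w w"
    by (simp add: cinner_add_left cinner_add_right cinner_mult_left cinner_mult_right algebra_simps)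
  also have "cinner I (mvec I R w) w = of_real (qform I R w)"
    using hermitian_adjoint[OF h, of w w] cinner_mvec_self[OF h, of w] by simp
  also have "cinner I w (mvec I R w) = of_real (qform I R w)"
    using cinner_mvec_self[OF h, of w] by simp
  finally show ?thesis
    using w by (simp add: cinner_self power2_eq_square algebra_simps)
qed

text \<open>If \<open>P \<noteq> R\<close>, a unit eigenvector \<open>w\<close> of \<open>P - R\<close> with eigenvalue \<open>\<mu> \<noteq> 0\<close> satisfies
  \<open>\<parallel>P w\<parallel>\<^sup>2 = \<parallel>R w\<parallel>\<^sup>2 + 2 \<mu> \<langle>w, R w\<rangle> + \<mu>\<^sup>2\<close> and \<open>\<parallel>R w\<parallel>\<^sup>2 = \<parallel>P w\<parallel>\<^sup>2 - 2 \<mu> \<langle>w, P w\<rangle> + \<mu>\<^sup>2\<close>;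
  as \<open>\<parallel>P w\<parallel> = \<parallel>R w\<parallel>\<close>, positivity of \<open>P\<close> and \<open>R\<close> gives \<open>0 \<le> \<mu> \<le> 0\<close>.\<close>

lemma pos_semidef_sqrt_unique:
  assumes fin: "finite I" and sP: "supported_on I P" and sR: "supported_on I R"
    and pP: "pos_semidef I P" and pR: "pos_semidef I R" and eq: "mat_mult I P P = mat_mult I R R"
  shows "P = R"
proof -
  have hP: "hermitian I P" and hR: "hermitian I R" using pP pR unfolding pos_semidef_def by auto
  define D where "D = (\<lambda>x y. P x y - R x y)"
  have "hermitian I D" unfolding hermitian_def D_def
  proof (intro ballI)
    fix x y assume "x \<in> I" "y \<in> I"
    then have "P y x = cnj (P x y)" "R y x = cnj (R x y)" using hP hR unfolding hermitian_def by blast+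
    then show "P y x - R y x = cnj (P x y - R x y)" by simp
  qed
  then obtain m mu w where o: "orthonormal I m w" and d: "spectral_decomp I m mu w D"
    and nz: "\<forall>j<m. mu j \<noteq> 0"
    using spectral_theorem[OF fin] by blast
  show ?thesis
  proof (cases "m = 0")
    case True
    then have "P x y = R x y" if "x \<in> I" "y \<in> I" for x y
      using d that unfolding spectral_decomp_def D_def by simp
    then show ?thesis using sP sR unfolding supported_on_def by (intro ext) metis
  next
    case False
    let ?w = "w 0" and ?\<mu> = "mu 0"
    have ev: "mvec I P ?w x - mvec I R ?w x = of_real ?\<mu> * ?w x" if "x \<in> I" for x
      using spectral_decomp_eigenvector[OF o d] False that
      unfolding eigenvector_def mvec_def D_def by (simp add: left_diff_distrib sum_subtractf)
    have "cinner I ?w ?w = 1" using o False unfolding orthonormal_def by simp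
    then have w: "sqnorm I ?w = 1" by (simp add: cinner_self)
    have same: "cinner I (mvec I P ?w) (mvec I P ?w) = cinner I (mvec I R ?w) (mvec I R ?w)"
      using cinner_mvec_mvec_hermitian[OF hP] cinner_mvec_mvec_hermitian[OF hR] eq by simp
    have "cinner I (mvec I P ?w) (mvec I P ?w) =
        cinner I (mvec I R ?w) (mvec I R ?w) + of_real (2 * ?\<mu> * qform I R ?w + ?\<mu>\<^sup>2)"
      using ev by (intro cinner_self_mvec_add_scaled[OF hR w]) (simp add: algebra_simps)
    then have r1: "2 * ?\<mu> * qform I R ?w + ?\<mu>\<^sup>2 = 0"
      using same by (metis add_cancel_right_right of_real_eq_0_iff)
    have "cinner I (mvec I R ?w) (mvec I R ?w) =
        cinner I (mvec I P ?w) (mvec I P ?w) + of_real (2 * (- ?\<mu>) * qform I P ?w + (- ?\<mu>)\<^sup>2)"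
      using ev by (intro cinner_self_mvec_add_scaled[OF hP w]) (simp add: algebra_simps)
    then have r2: "2 * (- ?\<mu>) * qform I P ?w + (- ?\<mu>)\<^sup>2 = 0"
      using same by (metis add_cancel_right_right of_real_eq_0_iff)
    have mu: "?\<mu> \<noteq> 0" using nz False by blast
    from r1 have "?\<mu> * (?\<mu> + 2 * qform I R ?w) = 0" by (simp add: power2_eq_square algebra_simps)
    with mu have "?\<mu> = - 2 * qform I R ?w" by simp
    moreover from r2 have "?\<mu> * (?\<mu> - 2 * qform I P ?w) = 0" by (simp add: power2_eq_square algebra_simps)
    with mu have "?\<mu> = 2 * qform I P ?w" by simp
    moreover have "0 \<le> qform I P ?w" "0 \<le> qform I R ?w" using pP pR unfolding pos_semidef_def by auto
    ultimately show ?thesis using mu by linarith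
  qed
qed

definition abs_spectral ::
    "'a set \<Rightarrow> nat \<Rightarrow> (nat \<Rightarrow> real) \<Rightarrow> (nat \<Rightarrow> 'a \<Rightarrow> complex) \<Rightarrow> 'a \<Rightarrow> 'a \<Rightarrow> complex" where
  "abs_spectral I m lam u =
     (\<lambda>x y. if x \<in> I \<and> y \<in> I then outer_sum {..<m} (\<lambda>j. of_real \<bar>lam j\<bar>) u x y else 0)"

lemma pos_semidef_abs_spectral: "pos_semidef I (abs_spectral I m lam u)"
proof -
  let ?P = "abs_spectral I m lam u"
  have "hermitian I ?P" unfolding hermitian_def abs_spectral_def outer_sum_def by (simp add: ac_simps)
  moreover have "0 \<le> qform I ?P v" for v
  proof -
    have "cinner I v (mvec I ?P v) = cinner I v (mvec I (outer_sum {..<m} (\<lambda>j. of_real \<bar>lam j\<bar>) u) v)"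
      by (rule cinner_cong) (simp_all add: mvec_def abs_spectral_def)
    also have "\<dots> = of_real (\<Sum>j<m. \<bar>lam j\<bar> * (cmod (cinner I (u j) v))\<^sup>2)"
    proof -
      have "cinner I v (u j) * cinner I (u j) v = of_real ((cmod (cinner I (u j) v))\<^sup>2)" for j
        by (metis complex_norm_square cnj_cinner mult.commute)
      then show ?thesis unfolding cinner_mvec_outer_sum by simp
    qed
    finally show ?thesis unfolding qform_def by (simp add: sum_nonneg)
  qed
  ultimately show ?thesis unfolding pos_semidef_def by blast
qed

lemma mat_mult_abs_spectral:
  assumes h: "hermitian I T" and o: "orthonormal I m u" and d: "spectral_decomp I m lam u T"
  shows "mat_mult I (abs_spectral I m lam u) (abs_spectral I m lam u) = mat_mult I (\<lambda>x y. cnj (T y x)) T"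
proof (intro ext)
  fix x y
  let ?a = "\<lambda>j. of_real \<bar>lam j\<bar> :: complex" and ?l = "\<lambda>j. of_real (lam j) :: complex"
  show "mat_mult I (abs_spectral I m lam u) (abs_spectral I m lam u) x y = mat_mult I (\<lambda>x y. cnj (T y x)) T x y"
  proof (cases "x \<in> I \<and> y \<in> I")
    case True
    have "(\<Sum>z\<in>I. outer_sum {..<m} ?a u x z * outer_sum {..<m} ?a u z y) =
        outer_sum {..<m} (\<lambda>j. ?a j * ?a j) u x y"
      by (rule mat_mult_outer_sum[OF o])
    also have "\<dots> = outer_sum {..<m} (\<lambda>j. ?l j * ?l j) u x y"
      unfolding outer_sum_def by (intro sum.cong refl) (simp flip: of_real_mult)
    also have "\<dots> = (\<Sum>z\<in>I. outer_sum {..<m} ?l u x z * outer_sum {..<m} ?l u z y)"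
      by (rule mat_mult_outer_sum[OF o, symmetric])
    also have "\<dots> = (\<Sum>z\<in>I. cnj (T z x) * T z y)"
    proof (intro sum.cong refl)
      fix z assume z: "z \<in> I"
      with h True have "T z x = cnj (T x z)" unfolding hermitian_def by blast
      with d z True show "outer_sum {..<m} ?l u x z * outer_sum {..<m} ?l u z y = cnj (T z x) * T z y"
        unfolding spectral_decomp_outer_sum by simp
    qed
    finally show ?thesis using True unfolding mat_mult_def abs_spectral_def by simp
  qed (auto simp: mat_mult_def)
qed

lemma supported_on_abs_spectral: "supported_on I (abs_spectral I m lam u)"
  unfolding supported_on_def abs_spectral_def by auto

lemma trace_abs_spectral:
  assumes "orthonormal I m u"
  shows "Re (\<Sum>x\<in>I. abs_spectral I m lam u x x) = (\<Sum>j<m. \<bar>lam j\<bar>)"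
  using trace_outer_sum[OF assms, of "\<lambda>j. of_real \<bar>lam j\<bar>"] unfolding abs_spectral_def by simp

lemma The_sqrt_eq_abs_spectral:
  assumes fin: "finite I" and h: "hermitian I T" and o: "orthonormal I m u"
    and d: "spectral_decomp I m lam u T"
  shows "(THE P. supported_on I P \<and> pos_semidef I P \<and> mat_mult I P P = mat_mult I (\<lambda>x y. cnj (T y x)) T)
    = abs_spectral I m lam u"
  using pos_semidef_sqrt_unique[OF fin _ supported_on_abs_spectral _ pos_semidef_abs_spectral]
    supported_on_abs_spectral pos_semidef_abs_spectral mat_mult_abs_spectral[OF h o d]
  by (intro the_equality) auto
section \<open>The operator norm\<close>

definition opnorm :: "'a set \<Rightarrow> ('a \<Rightarrow> 'a \<Rightarrow> complex) \<Rightarrow> real" where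
  "opnorm I G = Sup {sqrt (sqnorm I (mvec I G v)) | v. sqnorm I v \<le> 1}"

lemma opnorm_bdd:
  assumes fin: "finite I"
  shows "bdd_above {sqrt (sqnorm I (mvec I G v)) | v. sqnorm I v \<le> 1}"
proof -
  define B where "B = (\<Sum>x\<in>I. (\<Sum>y\<in>I. cmod (G x y))\<^sup>2)"
  have "sqrt (sqnorm I (mvec I G v)) \<le> sqrt B" if v: "sqnorm I v \<le> 1" for v
  proof -
    have "sqnorm I (mvec I G v) \<le> B" unfolding sqnorm_def B_def
    proof (rule sum_mono)
      fix x assume x: "x \<in> I"
      have "cmod (mvec I G v x) \<le> (\<Sum>y\<in>I. cmod (G x y) * cmod (v y))"
        unfolding mvec_def by (rule order_trans[OF norm_sum]) (simp add: norm_mult)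
      also have "\<dots> \<le> (\<Sum>y\<in>I. cmod (G x y) * 1)"
        using sqnorm_le_1_imp_norm_le_1[OF fin v] by (intro sum_mono mult_left_mono) auto
      finally show "(cmod (mvec I G v x))\<^sup>2 \<le> (\<Sum>y\<in>I. cmod (G x y))\<^sup>2"
        by (intro power_mono) auto
    qed
    then show ?thesis by simp
  qed
  then show ?thesis unfolding bdd_above_def by blast
qed

lemma opnorm_ge:
  assumes "finite I" "sqnorm I v \<le> 1"
  shows "sqrt (sqnorm I (mvec I G v)) \<le> opnorm I G"
  unfolding opnorm_def using assms by (intro cSup_upper opnorm_bdd) blast+

lemma opnorm_nonneg: "finite I \<Longrightarrow> 0 \<le> opnorm I G"
  using opnorm_ge[of I "\<lambda>_. 0" G] by (simp add: sqnorm_def order_trans[OF real_sqrt_ge_zero[OF sqnorm_nonneg]])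

lemma opnorm_zero: "opnorm I (\<lambda>_ _. 0) = 0"
proof -
  have "{sqrt (sqnorm I (mvec I (\<lambda>_ _. 0) v)) | v. sqnorm I v \<le> 1} = {0}"
    using exI[of "\<lambda>v. sqnorm I v \<le> 1" "\<lambda>_. 0"] unfolding mvec_def sqnorm_def by auto
  then show ?thesis unfolding opnorm_def by simp
qed

lemma cinner_cauchy_schwarz: "cmod (cinner I a b) \<le> sqrt (sqnorm I a) * sqrt (sqnorm I b)"
proof -
  have "cmod (cinner I a b) \<le> (\<Sum>x\<in>I. \<bar>cmod (a x)\<bar> * \<bar>cmod (b x)\<bar>)"
    unfolding cinner_def by (rule order_trans[OF norm_sum]) (simp add: norm_mult)
  also have "\<dots> \<le> L2_set (\<lambda>x. cmod (a x)) I * L2_set (\<lambda>x. cmod (b x)) I" by (rule L2_set_mult_ineq)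
  also have "\<dots> = sqrt (sqnorm I a) * sqrt (sqnorm I b)" unfolding L2_set_def sqnorm_def by simp
  finally show ?thesis .
qed

lemma norm_cinner_mvec_le_opnorm:
  assumes "finite I" and v: "sqnorm I v = 1"
  shows "cmod (cinner I v (mvec I G v)) \<le> opnorm I G"
  using cinner_cauchy_schwarz[of I v "mvec I G v"] opnorm_ge[OF assms(1), of v G] v by simp
section \<open>Configurations and partial traces\<close>

definition restrict_conf :: "nat set \<Rightarrow> config \<Rightarrow> config" where
  "restrict_conf A x = (\<lambda>i. if i \<in> A then x i else 0)"

lemma finite_Conf:
  assumes "finite S"
  shows "finite (Conf S d)"
proof -
  have "Conf S d \<subseteq> (\<lambda>f i. if i \<in> S then f i else 0) ` (PiE S (\<lambda>_. {..<d}))"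
  proof
    fix x assume x: "x \<in> Conf S d"
    then have "restrict x S \<in> PiE S (\<lambda>_. {..<d})" "x = (\<lambda>i. if i \<in> S then restrict x S i else 0)"
      unfolding Conf_def by auto
    then show "x \<in> (\<lambda>f i. if i \<in> S then f i else 0) ` (PiE S (\<lambda>_. {..<d}))" by blast
  qed
  moreover have "finite (PiE S (\<lambda>_. {..<d}))" using assms by (intro finite_PiE) auto
  ultimately show ?thesis using finite_subset by blast
qed

lemma Conf_empty: "Conf {} d = {\<lambda>_. 0}"
  unfolding Conf_def by auto

lemma Conf_eqI:
  assumes "x \<in> Conf A d" "y \<in> Conf A d" "\<forall>i\<in>A. x i = y i"
  shows "x = y"
proof (rule ext)
  fix i show "x i = y i"
    using assms unfolding Conf_def by (cases "i \<in> A") auto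
qed

lemma merge_in_Conf:
  assumes "A \<inter> B = {}" "z \<in> Conf A d" "p \<in> Conf B d"
  shows "merge A z p \<in> Conf (A \<union> B) d"
  using assms unfolding Conf_def merge_def by auto

lemma merge_merge: "merge A z (merge A w p) = merge A z p"
  unfolding merge_def by auto

lemma sum_Conf_Un:
  assumes disj: "A \<inter> B = {}"
  shows "(\<Sum>x\<in>Conf (A \<union> B) d. f x) = (\<Sum>z\<in>Conf A d. \<Sum>p\<in>Conf B d. f (merge A z p))"
proof -
  have "bij_betw (\<lambda>(z, p). merge A z p) (Conf A d \<times> Conf B d) (Conf (A \<union> B) d)"
  proof (rule bij_betw_byWitness[where f' = "\<lambda>x. (restrict_conf A x, restrict_conf B x)"])
    show "\<forall>a\<in>Conf A d \<times> Conf B d. (\<lambda>x. (restrict_conf A x, restrict_conf B x)) (case a of (z, p) \<Rightarrow> merge A z p) = a"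
      using disj unfolding Conf_def restrict_conf_def merge_def by (auto intro!: ext)
    show "\<forall>x\<in>Conf (A \<union> B) d. (case (restrict_conf A x, restrict_conf B x) of (z, p) \<Rightarrow> merge A z p) = x"
      unfolding Conf_def restrict_conf_def merge_def by auto
    show "(\<lambda>(z, p). merge A z p) ` (Conf A d \<times> Conf B d) \<subseteq> Conf (A \<union> B) d"
      using merge_in_Conf[OF disj] by auto
    show "(\<lambda>x. (restrict_conf A x, restrict_conf B x)) ` Conf (A \<union> B) d \<subseteq> Conf A d \<times> Conf B d"
      unfolding Conf_def restrict_conf_def by auto
  qed
  then have "(\<Sum>x\<in>Conf (A \<union> B) d. f x) = (\<Sum>(z, p)\<in>Conf A d \<times> Conf B d. f (merge A z p))"
    by (simp add: sum.reindex_bij_betw[symmetric] case_prod_unfold)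
  then show ?thesis by (simp add: sum.cartesian_product)
qed

lemma sum_Conf_insert:
  assumes k: "k \<notin> T"
  shows "(\<Sum>w\<in>Conf (insert k T) d. f w) = (\<Sum>a<d. \<Sum>w\<in>Conf T d. f (w(k := a)))"
proof -
  have "bij_betw (\<lambda>(a, w). w(k := a)) ({..<d} \<times> Conf T d) (Conf (insert k T) d)"
  proof (rule bij_betw_byWitness[where f' = "\<lambda>w. (w k, w(k := 0))"])
    show "\<forall>aw\<in>{..<d} \<times> Conf T d. (\<lambda>w. (w k, w(k := 0))) (case aw of (a, w) \<Rightarrow> w(k := a)) = aw"
      using k unfolding Conf_def by (auto intro!: ext)
    show "\<forall>w\<in>Conf (insert k T) d. (case (w k, w(k := 0)) of (a, w) \<Rightarrow> w(k := a)) = w"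
      by auto
    show "(\<lambda>(a, w). w(k := a)) ` ({..<d} \<times> Conf T d) \<subseteq> Conf (insert k T) d"
      unfolding Conf_def by auto
    show "(\<lambda>w. (w k, w(k := 0))) ` Conf (insert k T) d \<subseteq> {..<d} \<times> Conf T d"
      unfolding Conf_def by auto
  qed
  then have "(\<Sum>w\<in>Conf (insert k T) d. f w) = (\<Sum>(a, w)\<in>{..<d} \<times> Conf T d. f (w(k := a)))"
    by (simp add: sum.reindex_bij_betw[symmetric] case_prod_unfold)
  then show ?thesis by (simp add: sum.cartesian_product)
qed

lemma card_Conf: "card (Conf {0..<k} d) = d ^ k"
proof (induction k)
  case 0
  then show ?case by (simp add: Conf_empty)
next
  case (Suc k)
  have "card (Conf {0..<Suc k} d) = (\<Sum>w\<in>Conf (insert k {0..<k}) d. 1)"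
    by (simp add: atLeast0_lessThan_Suc)
  also have "\<dots> = (\<Sum>a<d. \<Sum>w\<in>Conf {0..<k} d. (1::nat))"
    by (rule sum_Conf_insert) simp
  finally show ?case using Suc by simp
qed

lemma ptrace_empty: "ptrace {} d X = X"
  unfolding ptrace_def Conf_empty merge_def by simp

lemma ptrace_merge: "ptrace A d X (merge A z1 p1) (merge A z2 p2) = ptrace A d X p1 p2"
  unfolding ptrace_def merge_merge ..

lemma self_adj_iff_hermitian: "self_adj S d A = hermitian (Conf S d) A"
  unfolding self_adj_def hermitian_def by simp

lemma hermitian_ptrace:
  assumes h: "hermitian (Conf S d) X" and AS: "A \<subseteq> S"
  shows "hermitian (Conf (S - A) d) (ptrace A d X)"
  unfolding hermitian_def
proof (intro ballI)
  fix x y assume x: "x \<in> Conf (S - A) d" and y: "y \<in> Conf (S - A) d"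
  have S: "A \<union> (S - A) = S" using AS by auto
  have "X (merge A z y) (merge A z x) = cnj (X (merge A z x) (merge A z y))" if z: "z \<in> Conf A d" for z
  proof -
    have "merge A z x \<in> Conf S d" "merge A z y \<in> Conf S d"
      using merge_in_Conf[of A "S - A" z d x] merge_in_Conf[of A "S - A" z d y] x y z S by auto
    with h show ?thesis unfolding hermitian_def by blast
  qed
  then show "ptrace A d X y x = cnj (ptrace A d X x y)"
    unfolding ptrace_def cnj_sum by (rule sum.cong[OF refl])
qed

definition trace_prod :: "'a set \<Rightarrow> ('a \<Rightarrow> 'a \<Rightarrow> complex) \<Rightarrow> ('a \<Rightarrow> 'a \<Rightarrow> complex) \<Rightarrow> complex" where
  "trace_prod I A B = (\<Sum>x\<in>I. \<Sum>y\<in>I. A x y * B y x)"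

lemma mtrace_mmult: "mtrace S d (mmult S d X H) = trace_prod (Conf S d) X H"
  unfolding mtrace_def mmult_def trace_prod_def by simp

lemma trace_prod_diff: "trace_prod I A (\<lambda>x y. B x y - C x y) = trace_prod I A B - trace_prod I A C"
  unfolding trace_prod_def by (simp add: right_diff_distrib sum_subtractf)

lemma op_norm_eq_opnorm: "op_norm S d A = opnorm (Conf S d) A"
  unfolding op_norm_def opnorm_def sqnorm_def mvec_def by simp

lemma trace_norm_spectral:
  assumes fin: "finite S" and h: "hermitian (Conf S d) T"
    and o: "orthonormal (Conf S d) m u" and dc: "spectral_decomp (Conf S d) m lam u T"
  shows "trace_norm S d T = (\<Sum>j<m. \<bar>lam j\<bar>)"
proof -
  have "abs_op S d T = (THE P. supported_on (Conf S d) P \<and> pos_semidef (Conf S d) P \<and>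
      mat_mult (Conf S d) P P = mat_mult (Conf S d) (\<lambda>x y. cnj (T y x)) T)"
    unfolding abs_op_def supported_def supported_on_def psd_def pos_semidef_def self_adj_iff_hermitian
      qform_double_sum mmult_def mat_mult_def adj_def
    by simp
  also have "\<dots> = abs_spectral (Conf S d) m lam u"
    by (rule The_sqrt_eq_abs_spectral[OF finite_Conf[OF fin] h o dc])
  finally show ?thesis
    unfolding trace_norm_def mtrace_def using trace_abs_spectral[OF o] by simp
qed

lemma trace_norm_nonneg:
  assumes "finite S" "hermitian (Conf S d) T"
  shows "0 \<le> trace_norm S d T"
  using spectral_theorem[OF finite_Conf[OF assms(1)] assms(2)] trace_norm_spectral[OF assms]
  by (metis sum_nonneg abs_ge_zero)
section \<open>Replacing the first sites by the maximally mixed state\<close>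

text \<open>\<open>mix_prefix d k X\<close> is \<open>d\<^sup>-\<^sup>k I\<^sub>0\<^sub>.\<^sub>.\<^sub>k\<^sub>-\<^sub>1 \<otimes> Tr\<^sub>0\<^sub>.\<^sub>.\<^sub>k\<^sub>-\<^sub>1 X\<close>; note that \<open>ptrace {0..<k} d X x y\<close>
  ignores the entries of \<open>x\<close> and \<open>y\<close> at the sites below \<open>k\<close>.\<close>

definition mix_prefix :: "nat \<Rightarrow> nat \<Rightarrow> qop \<Rightarrow> qop" where
  "mix_prefix d k X = (\<lambda>x y. if \<forall>i<k. x i = y i then ptrace {0..<k} d X x y / of_nat d ^ k else 0)"

lemma sum_nested_delta:
  assumes "finite C" "z \<in> C"
  shows "(\<Sum>z'\<in>C. \<Sum>p\<in>Q. if z = z' then f z' p else 0) = (\<Sum>p\<in>Q. f z p)"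
proof -
  have "(\<Sum>z'\<in>C. \<Sum>p\<in>Q. if z = z' then f z' p else 0) = (\<Sum>z'\<in>C. if z = z' then (\<Sum>p\<in>Q. f z' p) else 0)"
    by (intro sum.cong) auto
  with assms show ?thesis by simp
qed

lemma mix_prefix_merge:
  assumes "z1 \<in> Conf {0..<k} d" "z2 \<in> Conf {0..<k} d"
  shows "mix_prefix d k X (merge {0..<k} z1 p1) (merge {0..<k} z2 p2) =
    (if z1 = z2 then ptrace {0..<k} d X p1 p2 / of_nat d ^ k else 0)"
proof -
  have "(\<forall>i<k. merge {0..<k} z1 p1 i = merge {0..<k} z2 p2 i) \<longleftrightarrow> z1 = z2"
    using Conf_eqI[OF assms] unfolding merge_def by auto
  then show ?thesis unfolding mix_prefix_def ptrace_merge by simp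
qed

lemma mix_prefix_0: "mix_prefix d 0 X = X"
  unfolding mix_prefix_def by (simp add: ptrace_empty)

lemma mix_prefix_all:
  assumes x: "x \<in> Conf {0..<n} d" and y: "y \<in> Conf {0..<n} d" and tr: "mtrace {0..<n} d X = 0"
  shows "mix_prefix d n X x y = 0"
proof (cases "\<forall>i<n. x i = y i")
  case False
  then show ?thesis unfolding mix_prefix_def by (rule if_not_P)
next
  case True
  then have xy: "x = y" using Conf_eqI[OF x y] by simp
  have "merge {0..<n} z x = z" if "z \<in> Conf {0..<n} d" for z
    using that x unfolding merge_def Conf_def by (intro ext) auto
  then have "ptrace {0..<n} d X x x = mtrace {0..<n} d X"
    unfolding ptrace_def mtrace_def by (intro sum.cong) auto
  with tr show ?thesis unfolding mix_prefix_def xy by simp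
qed

lemma trace_prod_mix_prefix:
  assumes kn: "k \<le> n"
  shows "trace_prod (Conf {0..<n} d) (mix_prefix d k X) H =
    trace_prod (Conf ({0..<n} - {0..<k}) d) (ptrace {0..<k} d X) (ptrace {0..<k} d H) / of_nat d ^ k"
proof -
  let ?A = "{0..<k}" and ?B = "{0..<n} - {0..<k}"
  let ?C = "Conf ?A d" and ?Q = "Conf ?B d" and ?T = "ptrace {0..<k} d X"
  let ?m = "merge ?A"
  have disj: "?A \<inter> ?B = {}" by auto
  have "?A \<union> ?B = {0..<n}" using kn by auto
  then have eq: "Conf {0..<n} d = Conf (?A \<union> ?B) d" by simp
  have finC: "finite ?C" by (rule finite_Conf) simp
  have "trace_prod (Conf {0..<n} d) (mix_prefix d k X) H =
      (\<Sum>z1\<in>?C. \<Sum>p1\<in>?Q. \<Sum>z2\<in>?C. \<Sum>p2\<in>?Q. mix_prefix d k X (?m z1 p1) (?m z2 p2) * H (?m z2 p2) (?m z1 p1))"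
    unfolding trace_prod_def eq sum_Conf_Un[OF disj] ..
  also have "\<dots> = (\<Sum>z1\<in>?C. \<Sum>p1\<in>?Q. \<Sum>z2\<in>?C. \<Sum>p2\<in>?Q.
      if z1 = z2 then ?T p1 p2 / of_nat d ^ k * H (?m z2 p2) (?m z1 p1) else 0)"
    by (intro sum.cong refl) (simp add: mix_prefix_merge)
  also have "\<dots> = (\<Sum>z1\<in>?C. \<Sum>p1\<in>?Q. \<Sum>p2\<in>?Q. ?T p1 p2 / of_nat d ^ k * H (?m z1 p2) (?m z1 p1))"
    by (intro sum.cong refl sum_nested_delta finC)
  also have "\<dots> = (\<Sum>p1\<in>?Q. \<Sum>p2\<in>?Q. \<Sum>z1\<in>?C. ?T p1 p2 / of_nat d ^ k * H (?m z1 p2) (?m z1 p1))"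
    by (subst sum.swap) (rule sum.cong[OF refl], rule sum.swap)
  also have "\<dots> = trace_prod ?Q ?T (ptrace ?A d H) / of_nat d ^ k"
    unfolding trace_prod_def ptrace_def[of ?A d H] by (simp add: sum_divide_distrib sum_distrib_left)
  finally show ?thesis .
qed

lemma ptrace_Suc: "ptrace {0..<Suc k} d X q1 q2 = (\<Sum>a<d. ptrace {0..<k} d X (q1(k := a)) (q2(k := a)))"
proof -
  have merge_Suc: "merge {0..<Suc k} (w(k := a)) q = merge {0..<k} w (q(k := a))" for w q a
    unfolding merge_def by (rule ext) auto
  have "ptrace {0..<Suc k} d X q1 q2 =
      (\<Sum>w\<in>Conf (insert k {0..<k}) d. X (merge {0..<Suc k} w q1) (merge {0..<Suc k} w q2))"
    unfolding ptrace_def by (simp add: atLeast0_lessThan_Suc)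
  also have "\<dots> = (\<Sum>a<d. ptrace {0..<k} d X (q1(k := a)) (q2(k := a)))"
    unfolding sum_Conf_insert[of k "{0..<k}", simplified] ptrace_def merge_Suc ..
  finally show ?thesis .
qed

lemma ptrace_acts_trivially:
  assumes kn: "k < n"
    and triv: "\<forall>x\<in>Conf {0..<n} d. \<forall>y\<in>Conf {0..<n} d.
      H x y = (if x k = y k then K (x(k := 0)) (y(k := 0)) else 0)"
    and q1: "q1 \<in> Conf ({0..<n} - {0..<Suc k}) d" and q2: "q2 \<in> Conf ({0..<n} - {0..<Suc k}) d"
    and a: "a < d" and b: "b < d"
  shows "ptrace {0..<k} d H (q2(k := b)) (q1(k := a)) = (if b = a then ptrace {0..<k} d K q2 q1 else 0)"
proof -
  let ?A = "{0..<k}"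
  have in_Conf: "merge ?A w (q(k := c)) \<in> Conf {0..<n} d"
    if "w \<in> Conf ?A d" "q \<in> Conf ({0..<n} - {0..<Suc k}) d" "c < d" for w q c
  proof -
    have "q(k := c) \<in> Conf ({0..<n} - ?A) d" using that kn unfolding Conf_def by auto
    moreover have "?A \<union> ({0..<n} - ?A) = {0..<n}" using kn by auto
    ultimately show ?thesis using merge_in_Conf[of ?A "{0..<n} - ?A" w d] that by auto
  qed
  have drop_k: "(merge ?A w (q(k := c)))(k := 0) = merge ?A w q"
    if "q \<in> Conf ({0..<n} - {0..<Suc k}) d" for w q c
    using that unfolding merge_def Conf_def by auto
  have "H (merge ?A w (q2(k := b))) (merge ?A w (q1(k := a))) =
      (if b = a then K (merge ?A w q2) (merge ?A w q1) else 0)" if "w \<in> Conf ?A d" for w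
    using triv in_Conf[OF that q2 b] in_Conf[OF that q1 a] drop_k[OF q1] drop_k[OF q2]
    by (simp add: merge_def)
  then show ?thesis unfolding ptrace_def merge_merge by (simp cong: sum.cong)
qed

lemma trace_prod_ptrace_Suc:
  assumes kn: "k < n"
    and triv: "\<forall>x\<in>Conf {0..<n} d. \<forall>y\<in>Conf {0..<n} d.
      H x y = (if x k = y k then K (x(k := 0)) (y(k := 0)) else 0)"
  shows "of_nat d * trace_prod (Conf ({0..<n} - {0..<k}) d) (ptrace {0..<k} d X) (ptrace {0..<k} d H) =
    trace_prod (Conf ({0..<n} - {0..<Suc k}) d) (ptrace {0..<Suc k} d X) (ptrace {0..<Suc k} d H)"
proof -
  let ?Q' = "Conf ({0..<n} - {0..<Suc k}) d"
  let ?T = "ptrace {0..<k} d X" and ?G = "ptrace {0..<k} d K"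
  have B: "{0..<n} - {0..<k} = insert k ({0..<n} - {0..<Suc k})" using kn by auto
  have k: "k \<notin> {0..<n} - {0..<Suc k}" by simp
  note triv_k = ptrace_acts_trivially[OF kn triv]
  have "trace_prod (Conf ({0..<n} - {0..<k}) d) ?T (ptrace {0..<k} d H) =
      (\<Sum>a<d. \<Sum>q1\<in>?Q'. \<Sum>b<d. \<Sum>q2\<in>?Q'.
        ?T (q1(k := a)) (q2(k := b)) * ptrace {0..<k} d H (q2(k := b)) (q1(k := a)))"
    unfolding trace_prod_def B sum_Conf_insert[OF k] ..
  also have "\<dots> = (\<Sum>a<d. \<Sum>q1\<in>?Q'. \<Sum>b<d. \<Sum>q2\<in>?Q'.
      if a = b then ?T (q1(k := a)) (q2(k := b)) * ?G q2 q1 else 0)"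
    by (intro sum.cong refl) (auto simp: triv_k)
  also have "\<dots> = (\<Sum>a<d. \<Sum>q1\<in>?Q'. \<Sum>q2\<in>?Q'. ?T (q1(k := a)) (q2(k := a)) * ?G q2 q1)"
    by (intro sum.cong refl sum_nested_delta) auto
  also have "\<dots> = (\<Sum>q1\<in>?Q'. \<Sum>q2\<in>?Q'. ptrace {0..<Suc k} d X q1 q2 * ?G q2 q1)"
    unfolding ptrace_Suc sum_distrib_right by (subst sum.swap) (rule sum.cong[OF refl], rule sum.swap)
  finally have lhs: "trace_prod (Conf ({0..<n} - {0..<k}) d) ?T (ptrace {0..<k} d H) =
    (\<Sum>q1\<in>?Q'. \<Sum>q2\<in>?Q'. ptrace {0..<Suc k} d X q1 q2 * ?G q2 q1)" .
  have "ptrace {0..<Suc k} d H q2 q1 = of_nat d * ?G q2 q1" if "q1 \<in> ?Q'" "q2 \<in> ?Q'" for q1 q2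
    unfolding ptrace_Suc using triv_k[OF that] by simp
  then show ?thesis
    unfolding lhs by (simp add: trace_prod_def sum_distrib_left ac_simps cong: sum.cong)
qed

text \<open>Tracing site \<open>k\<close> out of an operator acting trivially on it only contributes a factor \<open>d\<close>,
  which cancels the extra \<open>1/d\<close> in \<open>mix_prefix d (Suc k) X\<close>.\<close>

lemma trace_prod_mix_prefix_Suc:
  assumes kn: "k < n" and d: "0 < d" and triv: "acts_trivially {0..<n} d k H"
  shows "trace_prod (Conf {0..<n} d) (mix_prefix d k X) H =
    trace_prod (Conf {0..<n} d) (mix_prefix d (Suc k) X) H"
proof -
  obtain K where "\<forall>x\<in>Conf {0..<n} d. \<forall>y\<in>Conf {0..<n} d.
      H x y = (if x k = y k then K (x(k := 0)) (y(k := 0)) else 0)"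
    using triv unfolding acts_trivially_def by blast
  note step = trace_prod_ptrace_Suc[OF kn this, of X]
  have "trace_prod (Conf {0..<n} d) (mix_prefix d k X) H =
      trace_prod (Conf ({0..<n} - {0..<k}) d) (ptrace {0..<k} d X) (ptrace {0..<k} d H) / of_nat d ^ k"
    using kn by (intro trace_prod_mix_prefix) simp
  also have "\<dots> = of_nat d * trace_prod (Conf ({0..<n} - {0..<k}) d) (ptrace {0..<k} d X)
      (ptrace {0..<k} d H) / of_nat d ^ Suc k"
    using d by simp
  also have "\<dots> = trace_prod (Conf {0..<n} d) (mix_prefix d (Suc k) X) H"
    unfolding step using kn by (intro trace_prod_mix_prefix[symmetric]) simp
  finally show ?thesis .
qed

text \<open>The product vector \<open>|w\<rangle> \<otimes> f\<close> of a basis configuration \<open>w\<close> of the first \<open>k\<close> sites with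
  a vector \<open>f\<close> on the remaining sites.\<close>

definition prefix_tensor :: "nat \<Rightarrow> config \<Rightarrow> (config \<Rightarrow> complex) \<Rightarrow> config \<Rightarrow> complex" where
  "prefix_tensor k w f = (\<lambda>x. if restrict_conf {0..<k} x = w then f (restrict_conf (- {0..<k}) x) else 0)"

lemma prefix_tensor_merge:
  assumes "z \<in> Conf {0..<k} d" "p \<in> Conf ({0..<n} - {0..<k}) d"
  shows "prefix_tensor k w f (merge {0..<k} z p) = (if z = w then f p else 0)"
proof -
  have "restrict_conf {0..<k} (merge {0..<k} z p) = z" "restrict_conf (- {0..<k}) (merge {0..<k} z p) = p"
    using assms unfolding restrict_conf_def merge_def Conf_def by (auto intro!: ext)
  then show ?thesis unfolding prefix_tensor_def by (simp only:)
qed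

lemma cinner_mvec_prefix_tensor:
  assumes kn: "k \<le> n" and w: "w \<in> Conf {0..<k} d"
  shows "cinner (Conf {0..<n} d) (prefix_tensor k w f) (mvec (Conf {0..<n} d) G (prefix_tensor k w f)) =
    (\<Sum>p2\<in>Conf ({0..<n} - {0..<k}) d. \<Sum>p1\<in>Conf ({0..<n} - {0..<k}) d.
        cnj (f p2) * G (merge {0..<k} w p2) (merge {0..<k} w p1) * f p1)"
proof -
  let ?A = "{0..<k}" and ?B = "{0..<n} - {0..<k}"
  let ?C = "Conf ?A d" and ?Q = "Conf ?B d"
  let ?m = "merge ?A" and ?e = "prefix_tensor k w f"
  have disj: "?A \<inter> ?B = {}" by auto
  have "?A \<union> ?B = {0..<n}" using kn by auto
  then have eq: "Conf {0..<n} d = Conf (?A \<union> ?B) d" by simp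
  have finC: "finite ?C" by (rule finite_Conf) simp
  have single: "sum g ?C = g w" if "\<And>z. z \<in> ?C \<Longrightarrow> z \<noteq> w \<Longrightarrow> g z = 0" for g :: "config \<Rightarrow> complex"
    using sum.mono_neutral_right[OF finC, of "{w}" g] w that by auto
  have "cinner (Conf {0..<n} d) ?e (mvec (Conf {0..<n} d) G ?e) =
     (\<Sum>z2\<in>?C. \<Sum>p2\<in>?Q. \<Sum>z1\<in>?C. \<Sum>p1\<in>?Q. cnj (?e (?m z2 p2)) * G (?m z2 p2) (?m z1 p1) * ?e (?m z1 p1))"
    unfolding cinner_def mvec_def eq sum_Conf_Un[OF disj] by (simp add: sum_distrib_left mult.assoc)
  also have "\<dots> = (\<Sum>z2\<in>?C. \<Sum>p2\<in>?Q. \<Sum>p1\<in>?Q. cnj (?e (?m z2 p2)) * G (?m z2 p2) (?m w p1) * ?e (?m w p1))"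
  proof (rule sum.cong[OF refl], rule sum.cong[OF refl])
    fix z2 p2
    show "(\<Sum>z1\<in>?C. \<Sum>p1\<in>?Q. cnj (?e (?m z2 p2)) * G (?m z2 p2) (?m z1 p1) * ?e (?m z1 p1)) =
        (\<Sum>p1\<in>?Q. cnj (?e (?m z2 p2)) * G (?m z2 p2) (?m w p1) * ?e (?m w p1))"
      by (rule single) (auto simp: prefix_tensor_merge)
  qed
  also have "\<dots> = (\<Sum>p2\<in>?Q. \<Sum>p1\<in>?Q. cnj (?e (?m w p2)) * G (?m w p2) (?m w p1) * ?e (?m w p1))"
    by (rule single) (auto simp: prefix_tensor_merge)
  also have "\<dots> = (\<Sum>p2\<in>?Q. \<Sum>p1\<in>?Q. cnj (f p2) * G (?m w p2) (?m w p1) * f p1)"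
    using w by (intro sum.cong refl) (simp add: prefix_tensor_merge)
  finally show ?thesis .
qed

lemma sqnorm_prefix_tensor:
  assumes kn: "k \<le> n" and w: "w \<in> Conf {0..<k} d"
  shows "sqnorm (Conf {0..<n} d) (prefix_tensor k w f) = sqnorm (Conf ({0..<n} - {0..<k}) d) f"
proof -
  let ?A = "{0..<k}" and ?B = "{0..<n} - {0..<k}"
  have disj: "?A \<inter> ?B = {}" by auto
  have "?A \<union> ?B = {0..<n}" using kn by auto
  then have eq: "Conf {0..<n} d = Conf (?A \<union> ?B) d" by simp
  have "sqnorm (Conf {0..<n} d) (prefix_tensor k w f) =
      (\<Sum>z\<in>Conf ?A d. \<Sum>p\<in>Conf ?B d. (cmod (prefix_tensor k w f (merge ?A z p)))\<^sup>2)"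
    unfolding sqnorm_def eq sum_Conf_Un[OF disj] ..
  also have "\<dots> = (\<Sum>z\<in>Conf ?A d. if z = w then sqnorm (Conf ?B d) f else 0)"
    unfolding sqnorm_def by (intro sum.cong refl) (auto simp: prefix_tensor_merge)
  also have "\<dots> = sqnorm (Conf ?B d) f" using w finite_Conf[of ?A d] by simp
  finally show ?thesis .
qed

lemma trace_prod_ptrace_spectral:
  assumes kn: "k \<le> n" and dc: "spectral_decomp (Conf ({0..<n} - {0..<k}) d) m lam u T"
  shows "trace_prod (Conf ({0..<n} - {0..<k}) d) T (ptrace {0..<k} d G) =
    (\<Sum>j<m. of_real (lam j) * (\<Sum>w\<in>Conf {0..<k} d. cinner (Conf {0..<n} d) (prefix_tensor k w (u j))
        (mvec (Conf {0..<n} d) G (prefix_tensor k w (u j)))))"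
proof -
  let ?C = "Conf {0..<k} d" and ?Q = "Conf ({0..<n} - {0..<k}) d"
  let ?g = "\<lambda>j w p1 p2. of_real (lam j) * (cnj (u j p2) * G (merge {0..<k} w p2) (merge {0..<k} w p1) * u j p1)"
  have "trace_prod ?Q T (ptrace {0..<k} d G) = (\<Sum>p1\<in>?Q. \<Sum>p2\<in>?Q. \<Sum>w\<in>?C. \<Sum>j<m. ?g j w p1 p2)"
    unfolding trace_prod_def ptrace_def using dc unfolding spectral_decomp_def
    by (intro sum.cong refl) (simp add: sum_distrib_left sum_distrib_right ac_simps)
  also have "\<dots> = (\<Sum>p1\<in>?Q. \<Sum>p2\<in>?Q. \<Sum>j<m. \<Sum>w\<in>?C. ?g j w p1 p2)"
    by (intro sum.cong refl) (rule sum.swap)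
  also have "\<dots> = (\<Sum>p1\<in>?Q. \<Sum>j<m. \<Sum>p2\<in>?Q. \<Sum>w\<in>?C. ?g j w p1 p2)"
    by (rule sum.cong[OF refl], rule sum.swap)
  also have "\<dots> = (\<Sum>j<m. \<Sum>p1\<in>?Q. \<Sum>w\<in>?C. \<Sum>p2\<in>?Q. ?g j w p1 p2)"
    by (subst sum.swap) (rule sum.cong[OF refl], rule sum.cong[OF refl], rule sum.swap)
  also have "\<dots> = (\<Sum>j<m. \<Sum>w\<in>?C. \<Sum>p2\<in>?Q. \<Sum>p1\<in>?Q. ?g j w p1 p2)"
    by (rule sum.cong[OF refl], subst sum.swap, rule sum.cong[OF refl], rule sum.swap)
  also have "\<dots> = (\<Sum>j<m. of_real (lam j) * (\<Sum>w\<in>?C. cinner (Conf {0..<n} d) (prefix_tensor k w (u j))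
      (mvec (Conf {0..<n} d) G (prefix_tensor k w (u j)))))"
    using kn by (simp add: cinner_mvec_prefix_tensor sum_distrib_left)
  finally show ?thesis .
qed

lemma norm_trace_prod_mix_prefix_le:
  assumes kn: "k \<le> n" and d: "0 < d" and h: "hermitian (Conf {0..<n} d) X"
  shows "cmod (trace_prod (Conf {0..<n} d) (mix_prefix d k X) G) \<le>
    trace_norm ({0..<n} - {0..<k}) d (ptrace {0..<k} d X) * opnorm (Conf {0..<n} d) G"
proof -
  let ?C = "Conf {0..<k} d" and ?Q = "Conf ({0..<n} - {0..<k}) d" and ?N = "Conf {0..<n} d"
  let ?T = "ptrace {0..<k} d X"
  have hT: "hermitian ?Q ?T" using hermitian_ptrace[OF h, of "{0..<k}"] kn by simp
  obtain m lam u where o: "orthonormal ?Q m u" and dc: "spectral_decomp ?Q m lam u ?T"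
    using spectral_theorem[OF finite_Conf hT] by blast
  define q where "q j w = cinner ?N (prefix_tensor k w (u j)) (mvec ?N G (prefix_tensor k w (u j)))" for j w
  have q: "cmod (q j w) \<le> opnorm ?N G" if "j < m" "w \<in> ?C" for j w
  proof -
    have "cinner ?Q (u j) (u j) = 1" using o that unfolding orthonormal_def by simp
    then have "sqnorm ?N (prefix_tensor k w (u j)) = 1"
      using sqnorm_prefix_tensor[OF kn that(2)] by (simp add: cinner_self)
    then show ?thesis unfolding q_def by (intro norm_cinner_mvec_le_opnorm finite_Conf) simp
  qed
  have "cmod (trace_prod ?Q ?T (ptrace {0..<k} d G)) \<le> (\<Sum>j<m. \<bar>lam j\<bar> * (\<Sum>w\<in>?C. cmod (q j w)))"
    unfolding trace_prod_ptrace_spectral[OF kn dc] q_def[symmetric]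
    by (rule order_trans[OF norm_sum sum_mono]) (simp add: norm_mult norm_sum mult_left_mono)
  also have "\<dots> \<le> (\<Sum>j<m. \<bar>lam j\<bar> * (\<Sum>w\<in>?C. opnorm ?N G))"
    using q by (intro sum_mono mult_left_mono) auto
  also have "\<dots> = real d ^ k * (trace_norm ({0..<n} - {0..<k}) d ?T * opnorm ?N G)"
    using trace_norm_spectral[OF _ hT o dc] by (simp add: card_Conf sum_distrib_left sum_distrib_right ac_simps)
  finally show ?thesis
    using trace_prod_mix_prefix[OF kn, of d X G] d by (simp add: norm_divide norm_power divide_le_eq ac_simps)
qed
section \<open>The bound on the quantum \<open>W\<^sub>1\<close> norm\<close>

lemma zero_self_adj_acts_trivially: "self_adj S d (\<lambda>_ _. 0) \<and> acts_trivially S d i (\<lambda>_ _. 0)"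
  unfolding self_adj_def acts_trivially_def by (auto intro: exI[of _ "\<lambda>_ _. 0"])

lemma lip_const_zero:
  assumes fin: "finite S" and ne: "S \<noteq> {}"
  shows "lip_const S d (\<lambda>_ _. 0) = 0"
proof -
  let ?D = "\<lambda>i. {op_norm S d (\<lambda>x y. 0 - H' x y) | H'. self_adj S d H' \<and> acts_trivially S d i H'}"
  have "Inf (?D i) = 0" for i
  proof (rule cInf_eq_minimum)
    show "0 \<in> ?D i" unfolding mem_Collect_eq
      by (rule exI[of _ "\<lambda>_ _. 0"]) (simp add: zero_self_adj_acts_trivially op_norm_eq_opnorm opnorm_zero)
  next
    fix a assume "a \<in> ?D i"
    then show "0 \<le> a" unfolding op_norm_eq_opnorm using opnorm_nonneg[OF finite_Conf[OF fin]] by blast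
  qed
  with ne show ?thesis unfolding lip_const_def by (simp add: image_constant_conv)
qed

lemma lip_const_approx_trivial:
  assumes fin: "finite S" and i: "i \<in> S" and lip: "lip_const S d H \<le> 1" and e: "0 < e"
  shows "\<exists>H'. self_adj S d H' \<and> acts_trivially S d i H' \<and> op_norm S d (\<lambda>x y. H x y - H' x y) < 1/2 + e"
proof -
  let ?D = "\<lambda>i. {op_norm S d (\<lambda>x y. H x y - H' x y) | H'. self_adj S d H' \<and> acts_trivially S d i H'}"
  have "Inf (?D i) \<le> Max ((\<lambda>i. Inf (?D i)) ` S)" using fin i by (intro Max_ge) auto
  with lip e have "Inf (?D i) < 1/2 + e" unfolding lip_const_def by simp
  moreover have "?D i \<noteq> {}" using zero_self_adj_acts_trivially by blast
  ultimately obtain a where a: "a \<in> ?D i" "a < 1/2 + e" using cInf_lessD[of "?D i" "1/2 + e"] by blast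
  from a(1) obtain H' where "a = op_norm S d (\<lambda>x y. H x y - H' x y)"
    and "self_adj S d H' \<and> acts_trivially S d i H'" by blast
  with a(2) show ?thesis by blast
qed

lemma trace_prod_telescope:
  assumes d: "0 < d" and tr: "mtrace {0..<n} d X = 0"
    and triv: "\<And>k. k < n \<Longrightarrow> acts_trivially {0..<n} d k (Hk k)"
  shows "trace_prod (Conf {0..<n} d) X H = (\<Sum>k<n.
    trace_prod (Conf {0..<n} d) (mix_prefix d k X) (\<lambda>x y. H x y - Hk k x y) -
    trace_prod (Conf {0..<n} d) (mix_prefix d (Suc k) X) (\<lambda>x y. H x y - Hk k x y))"
proof -
  let ?N = "Conf {0..<n} d"
  have "trace_prod ?N (mix_prefix d n X) B = 0" for B
    unfolding trace_prod_def using mix_prefix_all[OF _ _ tr] by simp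
  then have "trace_prod ?N X H = trace_prod ?N (mix_prefix d 0 X) H - trace_prod ?N (mix_prefix d n X) H"
    by (simp add: mix_prefix_0)
  also have "\<dots> = (\<Sum>k<n. trace_prod ?N (mix_prefix d k X) H - trace_prod ?N (mix_prefix d (Suc k) X) H)"
    by (rule sum_lessThan_telescope'[symmetric])
  also have "\<dots> = (\<Sum>k<n. trace_prod ?N (mix_prefix d k X) (\<lambda>x y. H x y - Hk k x y) -
      trace_prod ?N (mix_prefix d (Suc k) X) (\<lambda>x y. H x y - Hk k x y))"
    using trace_prod_mix_prefix_Suc[OF _ d triv] by (intro sum.cong refl) (simp add: trace_prod_diff)
  finally show ?thesis .
qed

lemma Re_trace_prod_le_approx:
  assumes n: "1 \<le> n" and d: "0 < d" and h: "hermitian (Conf {0..<n} d) X" and tr: "mtrace {0..<n} d X = 0"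
    and triv: "\<And>k. k < n \<Longrightarrow> acts_trivially {0..<n} d k (Hk k)"
    and near: "\<And>k. k < n \<Longrightarrow> opnorm (Conf {0..<n} d) (\<lambda>x y. H x y - Hk k x y) \<le> c"
  shows "Re (trace_prod (Conf {0..<n} d) X H) \<le>
    2 * c * (\<Sum>k<n. trace_norm ({0..<n} - {0..<k}) d (ptrace {0..<k} d X))"
proof -
  let ?N = "Conf {0..<n} d"
  define tn where "tn k = (if k < n then trace_norm ({0..<n} - {0..<k}) d (ptrace {0..<k} d X) else 0)" for k
  define Y where "Y j k = trace_prod ?N (mix_prefix d j X) (\<lambda>x y. H x y - Hk k x y)" for j k
  have tn0: "0 \<le> tn k" for k
    unfolding tn_def using trace_norm_nonneg[OF _ hermitian_ptrace[OF h, of "{0..<k}"]] by simp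
  have "0 \<le> opnorm ?N (\<lambda>x y. H x y - Hk 0 x y)" by (rule opnorm_nonneg[OF finite_Conf]) simp
  with near[of 0] n have c0: "0 \<le> c" by simp
  have Y: "cmod (Y j k) \<le> tn j * c" if "k < n" "j \<le> n" for j k
  proof (cases "j < n")
    case True
    have "cmod (Y j k) \<le> trace_norm ({0..<n} - {0..<j}) d (ptrace {0..<j} d X) * opnorm ?N (\<lambda>x y. H x y - Hk k x y)"
      unfolding Y_def using True d h by (intro norm_trace_prod_mix_prefix_le) auto
    also have "\<dots> \<le> tn j * c"
      using True tn0[of j] near[OF that(1)] unfolding tn_def by (simp add: mult_left_mono)
    finally show ?thesis .
  next
    case False
    with that have "j = n" by simp
    then show ?thesis unfolding Y_def trace_prod_def tn_def using mix_prefix_all[OF _ _ tr] by simp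
  qed
  have "trace_prod ?N X H = (\<Sum>k<n. Y k k - Y (Suc k) k)"
    unfolding Y_def by (rule trace_prod_telescope[OF d tr triv])
  then have "Re (trace_prod ?N X H) = (\<Sum>k<n. Re (Y k k - Y (Suc k) k))" by simp
  also have "\<dots> \<le> (\<Sum>k<n. tn k * c + tn (Suc k) * c)"
  proof (rule sum_mono)
    fix k assume "k \<in> {..<n}"
    then have k: "k < n" by simp
    have "Re (Y k k - Y (Suc k) k) \<le> cmod (Y k k) + cmod (Y (Suc k) k)"
      by (rule order_trans[OF complex_Re_le_cmod norm_triangle_ineq4])
    also have "\<dots> \<le> tn k * c + tn (Suc k) * c"
      using Y[OF k, of k] Y[OF k, of "Suc k"] k by simp
    finally show "Re (Y k k - Y (Suc k) k) \<le> tn k * c + tn (Suc k) * c" .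
  qed
  also have "\<dots> \<le> 2 * c * (\<Sum>k<n. tn k)"
  proof -
    obtain n' where n': "n = Suc n'" using n by (cases n) auto
    have "tn (Suc n') = 0" unfolding tn_def n' by simp
    then have "(\<Sum>k<n. tn (Suc k)) + tn 0 = (\<Sum>k<n. tn k)"
      unfolding n' sum.lessThan_Suc_shift[of tn n'] sum.lessThan_Suc[of "\<lambda>k. tn (Suc k)" n'] by simp
    then have "c * ((\<Sum>k<n. tn k) + (\<Sum>k<n. tn (Suc k))) \<le> c * (2 * (\<Sum>k<n. tn k))"
      using c0 tn0[of 0] by (intro mult_left_mono) auto
    then show ?thesis by (simp add: sum.distrib sum_distrib_left algebra_simps)
  qed
  finally show ?thesis unfolding tn_def by simp
qed

lemma Re_mtrace_mmult_le:
  assumes n: "1 \<le> n" and d: "0 < d" and sa: "self_adj {0..<n} d X" and tr: "mtrace {0..<n} d X = 0"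
    and lip: "lip_const {0..<n} d H \<le> 1"
  shows "Re (mtrace {0..<n} d (mmult {0..<n} d X H)) \<le>
    (\<Sum>k<n. trace_norm ({0..<n} - {0..<k}) d (ptrace {0..<k} d X))" (is "_ \<le> ?R")
proof -
  have "0 \<le> trace_norm ({0..<n} - {0..<k}) d (ptrace {0..<k} d X)" if "k < n" for k
    using trace_norm_nonneg[OF _ hermitian_ptrace[OF sa[unfolded self_adj_iff_hermitian], of "{0..<k}"]] that
    by simp
  then have R0: "0 \<le> ?R" by (intro sum_nonneg) simp
  have approx: "Re (mtrace {0..<n} d (mmult {0..<n} d X H)) \<le> (1 + 2 * e) * ?R" if e: "0 < e" for e
  proof -
    have "\<forall>k. \<exists>H'. k < n \<longrightarrow> acts_trivially {0..<n} d k H' \<and>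
        op_norm {0..<n} d (\<lambda>x y. H x y - H' x y) < 1/2 + e"
      using lip_const_approx_trivial[OF _ _ lip e] by simp blast
    then obtain Hk where Hk: "\<And>k. k < n \<Longrightarrow> acts_trivially {0..<n} d k (Hk k) \<and>
        opnorm (Conf {0..<n} d) (\<lambda>x y. H x y - Hk k x y) < 1/2 + e"
      unfolding op_norm_eq_opnorm by metis
    have "Re (trace_prod (Conf {0..<n} d) X H) \<le> 2 * (1/2 + e) * ?R"
      using Hk by (intro Re_trace_prod_le_approx[OF n d sa[unfolded self_adj_iff_hermitian] tr]) (auto intro: less_imp_le)
    then show ?thesis unfolding mtrace_mmult by (simp add: algebra_simps)
  qed
  show ?thesis
  proof (rule field_le_epsilon)
    fix e :: real assume e: "0 < e"
    have "Re (mtrace {0..<n} d (mmult {0..<n} d X H)) \<le> (1 + 2 * (e / (2 * ?R + 2))) * ?R"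
      using R0 e by (intro approx) simp
    also have "\<dots> \<le> ?R + e" using R0 e by (simp add: field_simps)
    finally show "Re (mtrace {0..<n} d (mmult {0..<n} d X H)) \<le> ?R + e" .
  qed
qed

theorem mainTheorem8:
  fixes n d :: nat and X :: qop
  assumes "1 \<le> n" and "2 \<le> d"
    and "self_adj {0..<n} d X" and "mtrace {0..<n} d X = 0"
  shows "W1 {0..<n} d X \<le>
    (\<Sum>k<n. trace_norm ({0..<n} - {0..<k}) d (ptrace {0..<k} d X))"
  unfolding W1_def
proof (rule cSup_least)
  have "lip_const {0..<n} d (\<lambda>_ _. 0) \<le> 1" using assms(1) by (simp add: lip_const_zero)
  then show "{Re (mtrace {0..<n} d (mmult {0..<n} d X H)) | H. self_adj {0..<n} d H \<and> lip_const {0..<n} d H \<le> 1}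
      \<noteq> {}"
    using zero_self_adj_acts_trivially by blast
qed (use Re_mtrace_mmult_le[OF assms(1) _ assms(3,4)] assms(2) in auto)

end
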